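(* Let $W\subseteq\mathbb P^{c-1}_k$ be a projective variety (a Zariski closed subset). Then there exists $C\in\mathsf{grK_{tac}}(R)$ with $V(C)=W$.
   Context: Standing setup: $Q$ is a regular local ring with maximal ideal $\mathfrak n$ and residue field $k$; $f_1,\dots,f_c\in\mathfrak n^2$ ($c\ge2$) is a $Q$-regular sequence; $P=Q[x_1,\dots,x_c]$ graded with $\deg x_i=1$, $Q$ in degree 0; $w=f_1x_1+\cdots+f_cx_c$, $R=P/(w)$. A complex of finitely generated free modules over a ring $A$ is totally acyclic if $H(C)=0=H(\operatorname{Hom}_A(C,A))$. $\mathsf{grK_{tac}}(R)$ is the category of totally acyclic complexes of finitely generated graded free $R$-modules with homogeneous differentials. A complex is contractible if its identity map is null-homotopic. For $\alpha=(\alpha_1:\dots:\alpha_c)\in\mathbb P^{c-1}_k$ with lifts $a_i\in Q$ of representative coordinates, $R_\alpha=R/(x_1-a_1,\dots,x_c-a_c)\cong Q/(a_1f_1+\cdots+a_cf_c)$, $C_\alpha=C\otimes_RR_\alpha$, and the rank variety is $V(C)=\{\alpha\in\mathbb P^{c-1}_k\mid C_\alpha\text{ not contractible}\}$. *)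

theory Defs
  imports Main "HOL-Library.Poly_Mapping"
begin

definition is_ideal :: "'a::comm_ring_1 set \<Rightarrow> bool" where
  "is_ideal I \<longleftrightarrow> 0 \<in> I \<and> (\<forall>x\<in>I. \<forall>y\<in>I. x + y \<in> I) \<and> (\<forall>r. \<forall>x\<in>I. r * x \<in> I)"

definition gen_ideal :: "'a::comm_ring_1 set \<Rightarrow> 'a set" where
  "gen_ideal S = {x. \<exists>F r. finite F \<and> F \<subseteq> S \<and> x = (\<Sum>g\<in>F. r g * g)}"

definition prime_ideal :: "'a::comm_ring_1 set \<Rightarrow> bool" where
  "prime_ideal P \<longleftrightarrow> is_ideal P \<and> P \<noteq> UNIV \<and> (\<forall>x y. x * y \<in> P \<longrightarrow> x \<in> P \<or> y \<in> P)"

definition noetherian_ring :: "'a::comm_ring_1 itself \<Rightarrow> bool" where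
  "noetherian_ring _ \<longleftrightarrow> (\<forall>I::'a set. is_ideal I \<longrightarrow> (\<exists>F. finite F \<and> I = gen_ideal F))"

definition local_ring_with :: "'a::comm_ring_1 set \<Rightarrow> bool" where
  "local_ring_with m \<longleftrightarrow> is_ideal m \<and> m \<noteq> UNIV \<and>
     (\<forall>I::'a set. is_ideal I \<and> I \<noteq> UNIV \<longrightarrow> I \<subseteq> m)"

definition has_prime_chain :: "'a::comm_ring_1 itself \<Rightarrow> nat \<Rightarrow> bool" where
  "has_prime_chain _ n \<longleftrightarrow> (\<exists>P::nat \<Rightarrow> 'a set.
      (\<forall>i\<le>n. prime_ideal (P i)) \<and> (\<forall>i<n. P i \<subset> P (Suc i)))"

definition krull_dim_eq :: "'a::comm_ring_1 itself \<Rightarrow> nat \<Rightarrow> bool" where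
  "krull_dim_eq T d \<longleftrightarrow> has_prime_chain T d \<and> (\<forall>e. has_prime_chain T e \<longrightarrow> e \<le> d)"

definition regular_local_ring :: "'a::comm_ring_1 set \<Rightarrow> bool" where
  "regular_local_ring m \<longleftrightarrow> noetherian_ring TYPE('a) \<and> local_ring_with m \<and>
     (\<exists>d. krull_dim_eq TYPE('a) d \<and> (\<exists>xs. length xs = d \<and> m = gen_ideal (set xs)))"

definition ideal_sq :: "'a::comm_ring_1 set \<Rightarrow> 'a set" where
  "ideal_sq m = gen_ideal {a * b | a b. a \<in> m \<and> b \<in> m}"

definition regular_sequence :: "nat \<Rightarrow> (nat \<Rightarrow> 'a::comm_ring_1) \<Rightarrow> bool" where
  "regular_sequence c f \<longleftrightarrow>
     (\<forall>i<c. \<forall>r. r * f i \<in> gen_ideal (f ` {..<i}) \<longrightarrow> r \<in> gen_ideal (f ` {..<i})) \<and>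
     gen_ideal (f ` {..<c}) \<noteq> UNIV"

type_synonym 'a mpoly = "(nat \<Rightarrow>\<^sub>0 nat) \<Rightarrow>\<^sub>0 'a"

definition Var :: "nat \<Rightarrow> 'a::comm_ring_1 mpoly" where
  "Var i = Poly_Mapping.single (Poly_Mapping.single i 1) 1"

definition Const :: "'a::comm_ring_1 \<Rightarrow> 'a mpoly" where
  "Const a = Poly_Mapping.single 0 a"

definition in_P :: "nat \<Rightarrow> 'a::comm_ring_1 mpoly \<Rightarrow> bool" where
  "in_P c p \<longleftrightarrow> (\<forall>mo\<in>Poly_Mapping.keys p. Poly_Mapping.keys mo \<subseteq> {..<c})"

definition mono_deg :: "(nat \<Rightarrow>\<^sub>0 nat) \<Rightarrow> nat" where
  "mono_deg mo = (\<Sum>i\<in>Poly_Mapping.keys mo. Poly_Mapping.lookup mo i)"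

text \<open>p is homogeneous of (integer) degree e (deg x_i = 1, Q in degree 0);
  0 is homogeneous of every degree, and only 0 has negative degree.\<close>
definition homogeneous :: "'a::comm_ring_1 mpoly \<Rightarrow> int \<Rightarrow> bool" where
  "homogeneous p e \<longleftrightarrow> (\<forall>mo\<in>Poly_Mapping.keys p. int (mono_deg mo) = e)"

definition eval_mpoly :: "'a::comm_ring_1 mpoly \<Rightarrow> (nat \<Rightarrow> 'a) \<Rightarrow> 'a" where
  "eval_mpoly p a = (\<Sum>mo\<in>Poly_Mapping.keys p.
      Poly_Mapping.lookup p mo * (\<Prod>i\<in>Poly_Mapping.keys mo. a i ^ Poly_Mapping.lookup mo i))"

definition wpot :: "nat \<Rightarrow> (nat \<Rightarrow> 'a::comm_ring_1) \<Rightarrow> 'a mpoly" where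
  "wpot c f = (\<Sum>i<c. Const (f i) * Var i)"

text \<open>A complex of f.g. graded free modules over R = P/(w) is encoded by
  ranks r n of C_n, internal degrees dg n j of the basis elements
  (C_n = direct sum of R(-dg n j), j < r n), and matrices d n : C_n \<rightarrow> C_(n-1)
  whose entries (i,j), i < r(n-1), j < r n, are lifts to P of elements of R.
  Everything is read modulo the ideal (w).\<close>
type_synonym 'a gcomplex =
  "(int \<Rightarrow> nat) \<times> (int \<Rightarrow> nat \<Rightarrow> int) \<times> (int \<Rightarrow> nat \<Rightarrow> nat \<Rightarrow> 'a mpoly)"

definition rk :: "'a gcomplex \<Rightarrow> int \<Rightarrow> nat" where "rk C = fst C"
definition dg :: "'a gcomplex \<Rightarrow> int \<Rightarrow> nat \<Rightarrow> int" where "dg C = fst (snd C)"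
definition dmat :: "'a gcomplex \<Rightarrow> int \<Rightarrow> nat \<Rightarrow> nat \<Rightarrow> 'a mpoly" where "dmat C = snd (snd C)"

definition cong_mod :: "'a::comm_ring_1 set \<Rightarrow> 'a \<Rightarrow> 'a \<Rightarrow> bool" where
  "cong_mod I x y \<longleftrightarrow> x - y \<in> I"

definition is_graded_complex :: "nat \<Rightarrow> (nat \<Rightarrow> 'a::comm_ring_1) \<Rightarrow> 'a gcomplex \<Rightarrow> bool" where
  "is_graded_complex c f C \<longleftrightarrow>
     (\<forall>n i j. in_P c (dmat C n i j)) \<and>
     (\<forall>n i j. (i \<ge> rk C (n - 1) \<or> j \<ge> rk C n) \<longrightarrow> dmat C n i j = 0) \<and>
     \<comment> \<open>homogeneous differentials (degree 0 maps)\<close>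
     (\<forall>n i j. i < rk C (n - 1) \<and> j < rk C n \<longrightarrow>
         homogeneous (dmat C n i j) (dg C n j - dg C (n - 1) i)) \<and>
     \<comment> \<open>d_(n-1) d_n = 0 over R\<close>
     (\<forall>n i k. i < rk C (n - 2) \<and> k < rk C n \<longrightarrow>
         cong_mod (gen_ideal {wpot c f})
           (\<Sum>j<rk C (n - 1). dmat C (n - 1) i j * dmat C n j k) 0)"

text \<open>H(C) = 0 over R (ungraded homology; vectors of lifts to P).\<close>
definition acyclic_R :: "nat \<Rightarrow> (nat \<Rightarrow> 'a::comm_ring_1) \<Rightarrow> 'a gcomplex \<Rightarrow> bool" where
  "acyclic_R c f C \<longleftrightarrow> (\<forall>n (v::nat \<Rightarrow> 'a mpoly).
     (\<forall>j. in_P c (v j)) \<and>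
     (\<forall>i<rk C (n - 1). cong_mod (gen_ideal {wpot c f}) (\<Sum>j<rk C n. dmat C n i j * v j) 0) \<longrightarrow>
     (\<exists>u::nat \<Rightarrow> 'a mpoly. (\<forall>k. in_P c (u k)) \<and>
        (\<forall>j<rk C n. cong_mod (gen_ideal {wpot c f}) (v j) (\<Sum>k<rk C (n + 1). dmat C (n + 1) j k * u k))))"

text \<open>H(Hom_R(C,R)) = 0: the dual complex has maps d_n^T : C_(n-1)^* \<rightarrow> C_n^*.\<close>
definition coacyclic_R :: "nat \<Rightarrow> (nat \<Rightarrow> 'a::comm_ring_1) \<Rightarrow> 'a gcomplex \<Rightarrow> bool" where
  "coacyclic_R c f C \<longleftrightarrow> (\<forall>n (v::nat \<Rightarrow> 'a mpoly).
     (\<forall>j. in_P c (v j)) \<and>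
     (\<forall>k<rk C (n + 1). cong_mod (gen_ideal {wpot c f}) (\<Sum>j<rk C n. dmat C (n + 1) j k * v j) 0) \<longrightarrow>
     (\<exists>u::nat \<Rightarrow> 'a mpoly. (\<forall>i. in_P c (u i)) \<and>
        (\<forall>j<rk C n. cong_mod (gen_ideal {wpot c f}) (v j) (\<Sum>i<rk C (n - 1). dmat C n i j * u i))))"

definition grKtac :: "nat \<Rightarrow> (nat \<Rightarrow> 'a::comm_ring_1) \<Rightarrow> 'a gcomplex \<Rightarrow> bool" where
  "grKtac c f C \<longleftrightarrow> is_graded_complex c f C \<and> acyclic_R c f C \<and> coacyclic_R c f C"

text \<open>The ideal of P defining R_alpha = R/(x_1 - a_1, ..., x_c - a_c) = P/(w, x_i - a_i).\<close>
definition J_alpha :: "nat \<Rightarrow> (nat \<Rightarrow> 'a::comm_ring_1) \<Rightarrow> (nat \<Rightarrow> 'a) \<Rightarrow> 'a mpoly set" where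
  "J_alpha c f a = gen_ideal (insert (wpot c f) {Var i - Const (a i) | i. i < c})"

text \<open>C_alpha = C \<otimes>_R R_alpha is contractible: there are maps s_n : C_n \<rightarrow> C_(n+1)
  over R_alpha with d_(n+1) s_n + s_(n-1) d_n = id.\<close>
definition contractible_at :: "nat \<Rightarrow> (nat \<Rightarrow> 'a::comm_ring_1) \<Rightarrow> 'a gcomplex \<Rightarrow> (nat \<Rightarrow> 'a) \<Rightarrow> bool" where
  "contractible_at c f C a \<longleftrightarrow> (\<exists>s::int \<Rightarrow> nat \<Rightarrow> nat \<Rightarrow> 'a mpoly.
     (\<forall>n i j. in_P c (s n i j)) \<and>
     (\<forall>n i j. i < rk C n \<and> j < rk C n \<longrightarrow>
        cong_mod (J_alpha c f a)
          ((\<Sum>k<rk C (n + 1). dmat C (n + 1) i k * s n k j) +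
           (\<Sum>k<rk C (n - 1). s (n - 1) i k * dmat C n k j))
          (if i = j then 1 else 0)))"

text \<open>a lifts the coordinates of a point of P^(c-1)_k (some coordinate nonzero in k).\<close>
definition proj_point_lift :: "nat \<Rightarrow> 'a::comm_ring_1 set \<Rightarrow> (nat \<Rightarrow> 'a) \<Rightarrow> bool" where
  "proj_point_lift c m a \<longleftrightarrow> (\<exists>i<c. a i \<notin> m)"

text \<open>Zariski closed subset of P^(c-1)_k, given as the common zero locus of a set S of
  homogeneous polynomials (lifted to Q[x_0..x_(c-1)]): a point with lift a lies in it iff
  every F in S vanishes at a modulo m.\<close>
definition homog_poly_set :: "nat \<Rightarrow> 'a::comm_ring_1 mpoly set \<Rightarrow> bool" where
  "homog_poly_set c S \<longleftrightarrow> (\<forall>F\<in>S. in_P c F \<and> (\<exists>e. homogeneous F e))"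

definition zero_locus :: "'a::comm_ring_1 set \<Rightarrow> 'a mpoly set \<Rightarrow> (nat \<Rightarrow> 'a) \<Rightarrow> bool" where
  "zero_locus m S a \<longleftrightarrow> (\<forall>F\<in>S. eval_mpoly F a \<in> m)"

end

theory Submission
  imports Defs
begin

(*
  Split every f i as a sum of products a b with a, b in m (possible since f i lies in m^2), so
  that w is the sum of the products (a x i) b, and add the pairs (F, 0) for finitely many forms F
  cutting out W (Hilbert basis theorem).  The Koszul matrix factorization K of this list of pairs
  (p, q) squares to the sum of the products p q, which is w; since w is a nonzerodivisor on P, K
  is a totally acyclic complex over R = P/(w).  At a point a, the specialisation of K is
  contractible as soon as some p is a unit at a, by an explicit contracting homotopy.  Otherwise
  every p and q, hence every entry of K, lies in m at a, and d s + s d = 1 would force 1 into m.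
  The factors a x i always lie in m, so the rank variety of K is the common zero locus of the
  forms F, which is W.
*)

abbreviation lookup where "lookup \<equiv> Poly_Mapping.lookup"
abbreviation single where "single \<equiv> Poly_Mapping.single"

section \<open>Ideals\<close>

lemma ideal_diff: "is_ideal I \<Longrightarrow> x \<in> I \<Longrightarrow> y \<in> I \<Longrightarrow> x - y \<in> I"
  unfolding is_ideal_def
  by (metis diff_conv_add_uminus mult_minus1)

lemma ideal_uminus: "is_ideal I \<Longrightarrow> x \<in> I \<Longrightarrow> - x \<in> I"
  unfolding is_ideal_def by (metis mult_minus1)

lemma ideal_add: "is_ideal I \<Longrightarrow> x \<in> I \<Longrightarrow> y \<in> I \<Longrightarrow> x + y \<in> I"
  unfolding is_ideal_def by blast

lemma ideal_zero: "is_ideal I \<Longrightarrow> 0 \<in> I"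
  unfolding is_ideal_def by blast

lemma ideal_multl: "is_ideal I \<Longrightarrow> x \<in> I \<Longrightarrow> r * x \<in> I"
  unfolding is_ideal_def by blast

lemma ideal_multr: "is_ideal I \<Longrightarrow> x \<in> I \<Longrightarrow> x * r \<in> I"
  unfolding is_ideal_def by (metis mult.commute)

lemma ideal_sum: "is_ideal I \<Longrightarrow> (\<And>x. x \<in> A \<Longrightarrow> g x \<in> I) \<Longrightarrow> sum g A \<in> I"
  by (induction A rule: infinite_finite_induct) (auto simp: ideal_zero ideal_add)

lemma ideal_eq_UNIV_if_one: "is_ideal I \<Longrightarrow> 1 \<in> I \<Longrightarrow> I = UNIV"
  using ideal_multl[of I 1] by auto

lemma prod_diff_in_ideal:
  assumes "is_ideal J" "\<And>i. i \<in> A \<Longrightarrow> x i - y i \<in> J"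
  shows "prod x A - prod y A \<in> J"
  using assms(2)
proof (induction A rule: infinite_finite_induct)
  case (infinite A) then show ?case using ideal_zero[OF assms(1)] by simp
next
  case empty then show ?case using ideal_zero[OF assms(1)] by simp
next
  case (insert i A)
  have "prod x (insert i A) - prod y (insert i A) = x i * (prod x A - prod y A) + (x i - y i) * prod y A"
    using insert by (simp add: algebra_simps)
  moreover have "x i * (prod x A - prod y A) \<in> J"
    by (rule ideal_multl[OF assms(1)]) (use insert in auto)
  moreover have "(x i - y i) * prod y A \<in> J"
    by (rule ideal_multr[OF assms(1)]) (use insert.prems in auto)
  ultimately show ?case using ideal_add[OF assms(1)] by metis
qed

lemma power_diff_in_ideal:
  assumes "is_ideal J" "x - y \<in> J"
  shows "x ^ k - y ^ k \<in> J"
  using prod_diff_in_ideal[OF assms(1), of "{..<k}" "\<lambda>_. x" "\<lambda>_. y"] assms(2) by simp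

lemma gen_ideal_base: "s \<in> S \<Longrightarrow> s \<in> gen_ideal S"
  unfolding gen_ideal_def
  by (rule CollectI, rule exI[of _ "{s}"], rule exI[of _ "\<lambda>_. 1"]) simp

lemma gen_ideal_least: "is_ideal I \<Longrightarrow> S \<subseteq> I \<Longrightarrow> gen_ideal S \<subseteq> I"
  unfolding gen_ideal_def
  by (auto intro!: ideal_sum ideal_multl)

lemma is_ideal_gen_ideal: "is_ideal (gen_ideal S)"
  unfolding is_ideal_def
proof (intro conjI ballI allI)
  show "0 \<in> gen_ideal S" unfolding gen_ideal_def
    by (rule CollectI, rule exI[of _ "{}"]) simp
next
  fix x y assume "x \<in> gen_ideal S" "y \<in> gen_ideal S"
  then obtain F1 r1 F2 r2 where f: "finite F1" "F1 \<subseteq> S" "x = (\<Sum>g\<in>F1. r1 g * g)"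
     "finite F2" "F2 \<subseteq> S" "y = (\<Sum>g\<in>F2. r2 g * g)"
    unfolding gen_ideal_def by blast
  define r where "r g = (if g \<in> F1 then r1 g else 0) + (if g \<in> F2 then r2 g else 0)" for g
  have "(\<Sum>g\<in>F1 \<union> F2. r g * g) = (\<Sum>g\<in>F1 \<union> F2. (if g \<in> F1 then r1 g * g else 0)) +
       (\<Sum>g\<in>F1 \<union> F2. (if g \<in> F2 then r2 g * g else 0))"
    unfolding sum.distrib[symmetric] by (rule sum.cong) (auto simp: r_def distrib_right)
  also have "\<dots> = x + y"
    using f by (simp add: sum.If_cases Int_absorb1)
  finally show "x + y \<in> gen_ideal S" unfolding gen_ideal_def using f
    by (intro CollectI exI[of _ "F1 \<union> F2"] exI[of _ r]) auto
next
  fix x s assume "x \<in> gen_ideal S"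
  then obtain F r where f: "finite F" "F \<subseteq> S" "x = (\<Sum>g\<in>F. r g * g)"
    unfolding gen_ideal_def by blast
  then have "s * x = (\<Sum>g\<in>F. (s * r g) * g)" by (simp add: sum_distrib_left mult.assoc)
  then show "s * x \<in> gen_ideal S" unfolding gen_ideal_def
    by (intro CollectI exI[of _ F] exI[of _ "\<lambda>g. s * r g"]) (use f in auto)
qed

lemma gen_ideal_subset_gen_ideal: "A \<subseteq> gen_ideal B \<Longrightarrow> gen_ideal A \<subseteq> gen_ideal B"
  by (rule gen_ideal_least[OF is_ideal_gen_ideal])

lemma gen_ideal_mono: "A \<subseteq> B \<Longrightarrow> gen_ideal A \<subseteq> gen_ideal B"
  using gen_ideal_base gen_ideal_subset_gen_ideal by blast

lemma gen_ideal_finite_subset: "x \<in> gen_ideal S \<Longrightarrow> \<exists>F. finite F \<and> F \<subseteq> S \<and> x \<in> gen_ideal F"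
  unfolding gen_ideal_def by blast

lemma finite_generating_subset:
  fixes S :: "'b::comm_ring_1 set"
  assumes "finite A" "A \<subseteq> gen_ideal S" "S \<subseteq> gen_ideal A"
  shows "\<exists>S0. finite S0 \<and> S0 \<subseteq> S \<and> S \<subseteq> gen_ideal S0"
proof -
  have "\<forall>x\<in>A. \<exists>F. finite F \<and> F \<subseteq> S \<and> x \<in> gen_ideal F"
    using assms(2) gen_ideal_finite_subset by blast
  then obtain Fx where Fx: "\<And>x. x \<in> A \<Longrightarrow> finite (Fx x) \<and> Fx x \<subseteq> S \<and> x \<in> gen_ideal (Fx x)"
    by metis
  define S0 where "S0 = (\<Union>x\<in>A. Fx x)"
  have "finite S0" using assms(1) Fx by (auto simp: S0_def)
  moreover have "S0 \<subseteq> S" using Fx by (auto simp: S0_def)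
  moreover have "A \<subseteq> gen_ideal S0"
  proof
    fix x assume "x \<in> A"
    then have "x \<in> gen_ideal (Fx x)" "Fx x \<subseteq> S0" using Fx by (auto simp: S0_def)
    then show "x \<in> gen_ideal S0" using gen_ideal_mono by blast
  qed
  then have "S \<subseteq> gen_ideal S0" using assms(3) gen_ideal_subset_gen_ideal by blast
  ultimately show ?thesis by blast
qed

lemma gen_ideal_empty: "gen_ideal {} = {0}"
  unfolding gen_ideal_def by auto

lemma gen_ideal_image_subset_sums:
  assumes "finite A"
  shows "gen_ideal (f ` A) \<subseteq> {\<Sum>k\<in>A. r k * f k | r. True}"
proof (rule gen_ideal_least)
  show "is_ideal {\<Sum>k\<in>A. r k * f k | r. True}"
    unfolding is_ideal_def
  proof (intro conjI ballI allI)
    show "0 \<in> {\<Sum>k\<in>A. r k * f k | r. True}" by (auto intro!: exI[of _ "\<lambda>_. 0"])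
  next
    fix x y assume "x \<in> {\<Sum>k\<in>A. r k * f k | r. True}" "y \<in> {\<Sum>k\<in>A. r k * f k | r. True}"
    then obtain r1 r2 where "x = (\<Sum>k\<in>A. r1 k * f k)" "y = (\<Sum>k\<in>A. r2 k * f k)" by blast
    then have "x + y = (\<Sum>k\<in>A. (r1 k + r2 k) * f k)" by (simp add: distrib_right sum.distrib)
    then show "x + y \<in> {\<Sum>k\<in>A. r k * f k | r. True}"
      unfolding mem_Collect_eq by (intro exI[of _ "\<lambda>k. r1 k + r2 k"]) simp
  next
    fix x s assume "x \<in> {\<Sum>k\<in>A. r k * f k | r. True}"
    then obtain r1 where "x = (\<Sum>k\<in>A. r1 k * f k)" by blast
    then have "s * x = (\<Sum>k\<in>A. (s * r1 k) * f k)" by (simp add: sum_distrib_left mult.assoc)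
    then show "s * x \<in> {\<Sum>k\<in>A. r k * f k | r. True}"
      unfolding mem_Collect_eq by (intro exI[of _ "\<lambda>k. s * r1 k"]) simp
  qed
  show "f ` A \<subseteq> {\<Sum>k\<in>A. r k * f k | r. True}"
  proof
    fix x assume "x \<in> f ` A"
    then obtain k0 where k0: "k0 \<in> A" "x = f k0" by blast
    have "(\<Sum>k\<in>A. (if k = k0 then 1 else 0) * f k) = f k0"
    proof -
      have "(\<Sum>k\<in>A. (if k = k0 then 1 else 0) * f k) = (\<Sum>k\<in>A. if k = k0 then f k else 0)"
        by (rule sum.cong) auto
      then show ?thesis using assms k0 by (simp add: sum.delta)
    qed
    then show "x \<in> {\<Sum>k\<in>A. r k * f k | r. True}" using k0 by (auto intro!: exI[of _ "\<lambda>k. if k = k0 then 1 else 0"])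
  qed
qed

lemma gen_ideal_singleton: "gen_ideal {w} = {r * w | r. True}"
proof
  show "gen_ideal {w} \<subseteq> {r * w | r. True}"
    using gen_ideal_image_subset_sums[of "{w}" id] by auto
  show "{r * w | r. True} \<subseteq> gen_ideal {w}"
    using ideal_multl[OF is_ideal_gen_ideal gen_ideal_base[of w "{w}"]] by blast
qed

lemma local_ring_unit:
  assumes "local_ring_with m" "x \<notin> m"
  shows "\<exists>v. v * x = 1"
proof -
  have "gen_ideal {x} = UNIV"
  proof (rule ccontr)
    assume "gen_ideal {x} \<noteq> UNIV"
    then have "gen_ideal {x} \<subseteq> m" using assms(1) is_ideal_gen_ideal unfolding local_ring_with_def by blast
    then show False using assms(2) gen_ideal_base by blast
  qed
  then have "1 \<in> gen_ideal {x}" by simp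
  then have "1 \<in> {r * x | r. True}" unfolding gen_ideal_singleton .
  then show ?thesis by auto
qed

lemma mem_ideal_sq_sum_list:
  assumes m: "is_ideal m" and x: "x \<in> ideal_sq m"
  shows "\<exists>L. (\<forall>(a, b)\<in>set L. a \<in> m \<and> b \<in> m) \<and> x = (\<Sum>(a, b)\<leftarrow>L. a * b)"
proof -
  define T where "T = {x. \<exists>L. (\<forall>(a, b)\<in>set L. a \<in> m \<and> b \<in> m) \<and> x = (\<Sum>(a, b)\<leftarrow>L. a * b)}"
  have "is_ideal T" unfolding is_ideal_def
  proof (intro conjI ballI allI)
    show "0 \<in> T" unfolding T_def by (auto intro!: exI[of _ "[]"])
  next
    fix x y assume "x \<in> T" "y \<in> T"
    then obtain L1 L2 where "\<forall>(a, b)\<in>set L1. a \<in> m \<and> b \<in> m" "x = (\<Sum>(a, b)\<leftarrow>L1. a * b)"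
      "\<forall>(a, b)\<in>set L2. a \<in> m \<and> b \<in> m" "y = (\<Sum>(a, b)\<leftarrow>L2. a * b)"
      unfolding T_def by blast
    then show "x + y \<in> T" unfolding T_def by (intro CollectI exI[of _ "L1 @ L2"]) auto
  next
    fix x r assume "x \<in> T"
    then obtain L1 where L1: "\<forall>(a, b)\<in>set L1. a \<in> m \<and> b \<in> m" "x = (\<Sum>(a, b)\<leftarrow>L1. a * b)"
      unfolding T_def by blast
    have "r * x = (\<Sum>(a, b)\<leftarrow>map (\<lambda>(a, b). (r * a, b)) L1. a * b)"
      unfolding L1(2) by (induction L1) (auto simp: algebra_simps)
    moreover have "\<forall>(a, b)\<in>set (map (\<lambda>(a, b). (r * a, b)) L1). a \<in> m \<and> b \<in> m"
      using L1(1) ideal_multl[OF m] by auto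
    ultimately show "r * x \<in> T" unfolding T_def by blast
  qed
  moreover have "{a * b | a b. a \<in> m \<and> b \<in> m} \<subseteq> T"
  proof
    fix z assume "z \<in> {a * b | a b. a \<in> m \<and> b \<in> m}"
    then obtain a b where "a \<in> m" "b \<in> m" "z = a * b" by blast
    then show "z \<in> T" unfolding T_def by (intro CollectI exI[of _ "[(a, b)]"]) simp
  qed
  ultimately show ?thesis using gen_ideal_least x unfolding ideal_sq_def T_def by blast
qed

section \<open>Polynomials\<close>

lemma lookup_le_imp_add_diff:
  fixes a T :: "nat \<Rightarrow>\<^sub>0 nat"
  assumes "\<forall>i. lookup a i \<le> lookup T i"
  shows "T = a + (T - a)"
  by (rule poly_mapping_eqI) (use assms in \<open>simp add: lookup_add lookup_minus\<close>)

lemma exists_add_eq_iff_lookup_le: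
  fixes a T :: "nat \<Rightarrow>\<^sub>0 nat"
  shows "(\<exists>t. T = a + t) \<longleftrightarrow> (\<forall>i. lookup a i \<le> lookup T i)"
  using lookup_le_imp_add_diff by (auto simp: lookup_add)

lemma lookup_single_mult:
  fixes p :: "'a::comm_ring_1 mpoly"
  shows "lookup (single a x * p) T = (if (\<forall>i. lookup a i \<le> lookup T i) then x * lookup p (T - a) else 0)"
proof -
  have "lookup (single a x * p) T = (\<Sum>l. (x when a = l) * (\<Sum>q. lookup p q when T = l + q))"
    by (simp add: lookup_mult lookup_single)
  also have "\<dots> = (\<Sum>l. (x * (\<Sum>q. lookup p q when T = l + q)) when a = l)"
    by (simp add: when_mult)
  also have "\<dots> = x * (\<Sum>q. lookup p q when T = a + q)"
    by simp
  also have "\<dots> = (if (\<forall>i. lookup a i \<le> lookup T i) then x * lookup p (T - a) else 0)"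
  proof (cases "\<forall>i. lookup a i \<le> lookup T i")
    case True
    have "\<And>q. (T = a + q) = (q = T - a)"
      using lookup_le_imp_add_diff[OF True] by (auto simp: add_diff_cancel_left')
    then show ?thesis using True by simp
  next
    case False
    then have "\<And>q. T \<noteq> a + q" using exists_add_eq_iff_lookup_le by blast
    then show ?thesis using False by auto
  qed
  finally show ?thesis .
qed

lemma keys_single_mult_subset:
  fixes p :: "'a::comm_ring_1 mpoly"
  shows "Poly_Mapping.keys (single b x * p) \<subseteq> (\<lambda>t. b + t) ` Poly_Mapping.keys p"
proof
  fix T assume "T \<in> Poly_Mapping.keys (single b x * p)"
  then have "lookup (single b x * p) T \<noteq> 0" by (simp add: in_keys_iff)
  then have h: "\<forall>i. lookup b i \<le> lookup T i" "lookup p (T - b) \<noteq> 0"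
    by (auto simp: lookup_single_mult split: if_splits)
  then show "T \<in> (\<lambda>t. b + t) ` Poly_Mapping.keys p"
    using lookup_le_imp_add_diff[OF h(1)] by (auto simp: in_keys_iff)
qed

lemma poly_mapping_sum_single:
  fixes p :: "('b \<Rightarrow>\<^sub>0 'c::comm_monoid_add)"
  shows "p = (\<Sum>mo\<in>Poly_Mapping.keys p. single mo (lookup p mo))"
proof (rule poly_mapping_eqI)
  fix k
  show "lookup p k = lookup (\<Sum>mo\<in>Poly_Mapping.keys p. single mo (lookup p mo)) k"
    by (auto simp: lookup_sum lookup_single when_def in_keys_iff)
qed

lemma Const_add: "Const (a + b) = Const a + Const b" by (simp add: Const_def single_add)

lemma Const_mult: "Const (a * b) = Const a * Const b" by (simp add: Const_def mult_single)

lemma Const_one: "Const 1 = 1" by (simp add: Const_def)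

lemma Const_zero: "Const 0 = 0" by (simp add: Const_def)

lemma Const_sum: "Const (sum g A) = (\<Sum>x\<in>A. Const (g x))"
  by (induction A rule: infinite_finite_induct) (auto simp: Const_zero Const_add)

lemma Const_prod: "Const (prod g A) = (\<Prod>x\<in>A. Const (g x))"
  by (induction A rule: infinite_finite_induct) (auto simp: Const_one Const_mult)

lemma Const_power: "Const (a ^ k) = Const a ^ k"
  by (induction k) (auto simp: Const_one Const_mult)

lemma Const_single: "Const x * single mo y = single mo (x * y)"
  by (simp add: Const_def mult_single)

lemma Var_power: "(Var i :: 'a::comm_ring_1 mpoly) ^ k = single (single i k) 1"
  by (induction k) (auto simp: Var_def mult_single single_add[symmetric] add.commute)

lemma single_prod:
  "(\<Prod>i\<in>A. single (g i) (1::'a::comm_ring_1)) = single (\<Sum>i\<in>A. g i) 1"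
  by (induction A rule: infinite_finite_induct) (auto simp: mult_single)

lemma monomial_sum_single:
  fixes mo :: "nat \<Rightarrow>\<^sub>0 nat"
  shows "(\<Sum>i\<in>Poly_Mapping.keys mo. single i (lookup mo i)) = mo"
  using poly_mapping_sum_single[of mo] by simp

lemma single_eq_Const_prod_Var:
  fixes x :: "'a::comm_ring_1"
  shows "single mo x = Const x * (\<Prod>i\<in>Poly_Mapping.keys mo. Var i ^ lookup mo i)"
  by (simp add: Var_power single_prod monomial_sum_single Const_single)

lemma homogeneous_zero: "homogeneous 0 e" by (simp add: homogeneous_def)

lemma homogeneous_uminus: "homogeneous p e \<Longrightarrow> homogeneous (- p) e" by (simp add: homogeneous_def keys_minus)

lemma homogeneous_Const: "homogeneous (Const b) 0"
  by (simp add: homogeneous_def Const_def mono_deg_def)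

lemma homogeneous_Const_mult_Var: "homogeneous (Const a * Var i) 1"
proof -
  have "Const a * Var i = single (single i 1) a" by (simp add: Var_def Const_single)
  then show ?thesis
    by (simp add: homogeneous_def mono_deg_def)
qed

definition monom_eval :: "(nat \<Rightarrow> 'a::comm_ring_1) \<Rightarrow> (nat \<Rightarrow>\<^sub>0 nat) \<Rightarrow> 'a" where
  "monom_eval a mo = (\<Prod>i\<in>Poly_Mapping.keys mo. a i ^ lookup mo i)"

lemma eval_mpoly_monom_eval: "eval_mpoly p a = (\<Sum>mo\<in>Poly_Mapping.keys p. lookup p mo * monom_eval a mo)"
  by (simp add: eval_mpoly_def monom_eval_def)

lemma monom_eval_superset:
  assumes "finite K" "Poly_Mapping.keys mo \<subseteq> K"
  shows "monom_eval a mo = (\<Prod>i\<in>K. a i ^ lookup mo i)"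
  unfolding monom_eval_def
  by (rule prod.mono_neutral_left) (use assms in \<open>auto simp: in_keys_iff\<close>)

lemma monom_eval_add: "monom_eval a (mo1 + mo2) = monom_eval a mo1 * monom_eval a mo2"
proof -
  let ?K = "Poly_Mapping.keys mo1 \<union> Poly_Mapping.keys mo2"
  have "monom_eval a (mo1 + mo2) = (\<Prod>i\<in>?K. a i ^ lookup (mo1 + mo2) i)"
    by (rule monom_eval_superset) (auto simp: keys_add intro: subset_trans[OF keys_add])
  also have "\<dots> = (\<Prod>i\<in>?K. a i ^ lookup mo1 i) * (\<Prod>i\<in>?K. a i ^ lookup mo2 i)"
    by (simp add: lookup_add power_add prod.distrib)
  also have "\<dots> = monom_eval a mo1 * monom_eval a mo2"
    using monom_eval_superset[of ?K mo1 a] monom_eval_superset[of ?K mo2 a] by simp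
  finally show ?thesis .
qed

lemma monom_eval_zero: "monom_eval a 0 = 1" by (simp add: monom_eval_def)

lemma eval_mpoly_superset:
  assumes "finite K" "Poly_Mapping.keys p \<subseteq> K"
  shows "eval_mpoly p a = (\<Sum>mo\<in>K. lookup p mo * monom_eval a mo)"
  unfolding eval_mpoly_monom_eval
  by (rule sum.mono_neutral_left) (use assms in \<open>auto simp: in_keys_iff\<close>)

lemma eval_mpoly_add: "eval_mpoly (p + q) a = eval_mpoly p a + eval_mpoly q a"
proof -
  let ?K = "Poly_Mapping.keys p \<union> Poly_Mapping.keys q"
  have "eval_mpoly (p + q) a = (\<Sum>mo\<in>?K. lookup (p + q) mo * monom_eval a mo)"
    by (rule eval_mpoly_superset) (use keys_add[of p q] in auto)
  also have "\<dots> = (\<Sum>mo\<in>?K. lookup p mo * monom_eval a mo) + (\<Sum>mo\<in>?K. lookup q mo * monom_eval a mo)"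
    by (simp add: lookup_add distrib_right sum.distrib)
  also have "\<dots> = eval_mpoly p a + eval_mpoly q a"
    using eval_mpoly_superset[of ?K p a] eval_mpoly_superset[of ?K q a] by simp
  finally show ?thesis .
qed

lemma eval_mpoly_zero: "eval_mpoly 0 a = 0" by (simp add: eval_mpoly_monom_eval)

lemma eval_mpoly_uminus: "eval_mpoly (- p) a = - eval_mpoly p a"
  by (simp add: eval_mpoly_monom_eval keys_minus sum_negf)

lemma eval_mpoly_diff: "eval_mpoly (p - q) a = eval_mpoly p a - eval_mpoly q a"
  using eval_mpoly_add[of p "-q" a] by (simp add: eval_mpoly_uminus)

lemma eval_mpoly_sum: "eval_mpoly (sum g A) a = (\<Sum>x\<in>A. eval_mpoly (g x) a)"
  by (induction A rule: infinite_finite_induct) (auto simp: eval_mpoly_zero eval_mpoly_add)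

lemma eval_mpoly_single: "eval_mpoly (single mo x) a = x * monom_eval a mo"
  by (cases "x = 0") (auto simp: eval_mpoly_monom_eval)

lemma eval_mpoly_single_mult:
  "eval_mpoly (single b x * p) a = x * monom_eval a b * eval_mpoly p a"
proof -
  have "eval_mpoly (single b x * p) a =
        (\<Sum>T\<in>(\<lambda>t. b + t) ` Poly_Mapping.keys p. lookup (single b x * p) T * monom_eval a T)"
    by (rule eval_mpoly_superset) (auto simp: keys_single_mult_subset)
  also have "\<dots> = (\<Sum>t\<in>Poly_Mapping.keys p. lookup (single b x * p) (b + t) * monom_eval a (b + t))"
    by (rule sum.reindex[unfolded comp_def]) (auto simp: inj_on_def)
  also have "\<dots> = (\<Sum>t\<in>Poly_Mapping.keys p. x * monom_eval a b * (lookup p t * monom_eval a t))"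
    by (rule sum.cong) (auto simp: lookup_single_mult lookup_add monom_eval_add)
  also have "\<dots> = x * monom_eval a b * eval_mpoly p a"
    by (simp add: eval_mpoly_monom_eval sum_distrib_left)
  finally show ?thesis .
qed

lemma eval_mpoly_mult: "eval_mpoly (p * q) a = eval_mpoly p a * eval_mpoly q a"
proof -
  have "p * q = (\<Sum>mo\<in>Poly_Mapping.keys p. single mo (lookup p mo) * q)"
    by (subst poly_mapping_sum_single[of p]) (simp add: sum_distrib_right)
  then have "eval_mpoly (p * q) a = (\<Sum>mo\<in>Poly_Mapping.keys p. lookup p mo * monom_eval a mo * eval_mpoly q a)"
    by (simp add: eval_mpoly_sum eval_mpoly_single_mult)
  also have "\<dots> = eval_mpoly p a * eval_mpoly q a"
    by (simp add: eval_mpoly_monom_eval sum_distrib_right)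
  finally show ?thesis .
qed

lemma eval_mpoly_Const: "eval_mpoly (Const x) a = x"
  by (simp add: Const_def eval_mpoly_single monom_eval_zero)

lemma eval_mpoly_one: "eval_mpoly 1 a = 1"
  using eval_mpoly_Const[of 1 a] by (simp add: Const_one)

lemma eval_mpoly_Var: "eval_mpoly (Var i) a = a i"
  by (simp add: Var_def eval_mpoly_single monom_eval_def)

lemma eval_mpoly_gen_ideal:
  assumes "is_ideal m" "\<forall>g\<in>G. eval_mpoly g a \<in> m" "p \<in> gen_ideal G"
  shows "eval_mpoly p a \<in> m"
proof -
  obtain F r where "finite F" "F \<subseteq> G" "p = (\<Sum>g\<in>F. r g * g)"
    using assms(3) unfolding gen_ideal_def by blast
  then show ?thesis using assms
    by (auto simp: eval_mpoly_sum eval_mpoly_mult intro!: ideal_sum ideal_multl)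
qed

definition monomial_below :: "nat \<Rightarrow> (nat \<Rightarrow>\<^sub>0 nat) \<Rightarrow> bool" where
  "monomial_below n mo \<longleftrightarrow> Poly_Mapping.keys mo \<subseteq> {..<n}"

lemma monomial_below_iff: "monomial_below n mo \<longleftrightarrow> (\<forall>i. n \<le> i \<longrightarrow> lookup mo i = 0)"
  unfolding monomial_below_def subset_iff in_keys_iff by (metis lessThan_iff not_le)

lemma monomial_below_add: "monomial_below n (a + b) \<longleftrightarrow> monomial_below n a \<and> monomial_below n b"
  by (auto simp: monomial_below_iff lookup_add)

text \<open>Ideals are generated in the ring of polynomials in all variables; deleting the monomials
  that involve \<open>x\<^sub>n, x\<^sub>n\<^sub>+\<^sub>1, \<dots>\<close> is a ring homomorphism that moves the coefficients of a
  combination back into \<open>Q[x\<^sub>0, \<dots>, x\<^sub>n\<^sub>-\<^sub>1]\<close>.\<close>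
definition truncate :: "nat \<Rightarrow> 'a::comm_ring_1 mpoly \<Rightarrow> 'a mpoly" where
  "truncate n p = Abs_poly_mapping (\<lambda>mo. if monomial_below n mo then lookup p mo else 0)"

lemma lookup_truncate: "lookup (truncate n p) mo = (if monomial_below n mo then lookup p mo else 0)"
proof -
  have "finite {mo. (if monomial_below n mo then lookup p mo else 0) \<noteq> 0}"
    by (rule finite_subset[OF _ finite_lookup[of p]]) auto
  then show ?thesis unfolding truncate_def by simp
qed

lemma truncate_add: "truncate n (p + q) = truncate n p + truncate n q"
  by (rule poly_mapping_eqI) (simp add: lookup_truncate lookup_add)

lemma truncate_uminus: "truncate n (- p) = - truncate n p"
  by (rule poly_mapping_eqI) (simp add: lookup_truncate)

lemma truncate_diff: "truncate n (p - q) = truncate n p - truncate n q"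
  by (rule poly_mapping_eqI) (simp add: lookup_truncate lookup_minus)

lemma truncate_zero: "truncate n 0 = 0"
  by (rule poly_mapping_eqI) (simp add: lookup_truncate)

lemma truncate_sum: "truncate n (sum g A) = (\<Sum>x\<in>A. truncate n (g x))"
  by (induction A rule: infinite_finite_induct) (auto simp: truncate_zero truncate_add)

lemma truncate_single_mult:
  "truncate n (single a x * q) = (if monomial_below n a then single a x * truncate n q else 0)"
proof (rule poly_mapping_eqI)
  fix T
  show "lookup (truncate n (single a x * q)) T = lookup (if monomial_below n a then single a x * truncate n q else 0) T"
  proof (cases "\<forall>i. lookup a i \<le> lookup T i")
    case True
    have "monomial_below n T \<longleftrightarrow> monomial_below n a \<and> monomial_below n (T - a)"
      using lookup_le_imp_add_diff[OF True] monomial_below_add by metis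
    then show ?thesis using True
      by (auto simp: lookup_truncate lookup_single_mult)
  next
    case False
    then show ?thesis by (auto simp: lookup_truncate lookup_single_mult)
  qed
qed

lemma truncate_one: "truncate n 1 = 1"
  by (rule poly_mapping_eqI) (auto simp: lookup_truncate lookup_one when_def monomial_below_def)

lemma truncate_single: "truncate n (single a x) = (if monomial_below n a then single a x else 0)"
  using truncate_single_mult[of n a x 1] by (simp add: truncate_one)

lemma truncate_mult: "truncate n (p * q) = truncate n p * truncate n q"
proof -
  have "truncate n (p * q) = (\<Sum>mo\<in>Poly_Mapping.keys p. truncate n (single mo (lookup p mo) * q))"
    by (subst poly_mapping_sum_single[of p]) (simp add: sum_distrib_right truncate_sum)
  also have "\<dots> = (\<Sum>mo\<in>Poly_Mapping.keys p. truncate n (single mo (lookup p mo)) * truncate n q)"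
    by (rule sum.cong) (auto simp: truncate_single_mult truncate_single)
  also have "\<dots> = truncate n p * truncate n q"
    by (subst (2) poly_mapping_sum_single[of p]) (simp add: sum_distrib_right truncate_sum)
  finally show ?thesis .
qed

lemma in_P_iff_monomial_below: "in_P n p \<longleftrightarrow> (\<forall>mo\<in>Poly_Mapping.keys p. monomial_below n mo)"
  unfolding in_P_def monomial_below_def by simp

lemma in_P_iff_truncate: "in_P n p \<longleftrightarrow> truncate n p = p"
proof
  assume "in_P n p" then show "truncate n p = p"
    by (intro poly_mapping_eqI) (auto simp: lookup_truncate in_P_iff_monomial_below in_keys_iff)
next
  assume h: "truncate n p = p"
  show "in_P n p" unfolding in_P_iff_monomial_below
  proof
    fix mo assume "mo \<in> Poly_Mapping.keys p"
    then have "lookup (truncate n p) mo \<noteq> 0" using h by (simp add: in_keys_iff)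
    then show "monomial_below n mo" by (simp add: lookup_truncate split: if_splits)
  qed
qed

lemma in_P_truncate: "in_P n (truncate n p)"
  unfolding in_P_iff_monomial_below by (auto simp: in_keys_iff lookup_truncate split: if_splits)

lemma in_P_mult: "in_P n p \<Longrightarrow> in_P n q \<Longrightarrow> in_P n (p * q)"
  by (simp add: in_P_iff_truncate truncate_mult)

lemma in_P_diff: "in_P n p \<Longrightarrow> in_P n q \<Longrightarrow> in_P n (p - q)"
  by (simp add: in_P_iff_truncate truncate_diff)

lemma in_P_uminus: "in_P n p \<Longrightarrow> in_P n (- p)"
  by (simp add: in_P_iff_truncate truncate_uminus)

lemma in_P_zero: "in_P n 0"
  by (simp add: in_P_iff_truncate truncate_zero)

lemma in_P_sum: "(\<And>x. x \<in> A \<Longrightarrow> in_P n (g x)) \<Longrightarrow> in_P n (sum g A)"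
  by (simp add: in_P_iff_truncate truncate_sum)

lemma in_P_Const: "in_P n (Const x)"
  by (simp add: in_P_iff_truncate Const_def truncate_single monomial_below_def)

lemma in_P_Var: "i < n \<Longrightarrow> in_P n (Var i)"
  by (simp add: in_P_iff_truncate Var_def truncate_single monomial_below_def)

lemma in_P_mono: "n \<le> n' \<Longrightarrow> in_P n p \<Longrightarrow> in_P n' p"
  unfolding in_P_def by (meson lessThan_iff order_less_le_trans subsetD subsetI)

lemma in_P_power: "in_P n p \<Longrightarrow> in_P n (p ^ k)"
  by (induction k) (auto intro: in_P_mult simp: in_P_Const[of n 1, unfolded Const_one])

lemma in_P_lookup_eq_0: "in_P n r \<Longrightarrow> \<forall>mo\<in>Poly_Mapping.keys r. lookup mo n = 0"
  unfolding in_P_iff_monomial_below monomial_below_iff by blast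

lemma minus_eval_in_point_ideal:
  fixes p :: "'a::comm_ring_1 mpoly"
  assumes "in_P c p"
  shows "p - Const (eval_mpoly p a) \<in> gen_ideal {Var i - Const (a i) | i. i < c}"
proof -
  let ?J = "gen_ideal {Var i - Const (a i) | i. i < c}"
  have J: "is_ideal ?J" by (rule is_ideal_gen_ideal)
  have mono: "(\<Prod>i\<in>Poly_Mapping.keys mo. Var i ^ lookup mo i) - Const (monom_eval a mo) \<in> ?J"
    if "monomial_below c mo" for mo
  proof -
    have "Const (monom_eval a mo) = (\<Prod>i\<in>Poly_Mapping.keys mo. Const (a i) ^ lookup mo i)"
      by (simp add: monom_eval_def Const_prod Const_power)
    moreover have "(\<Prod>i\<in>Poly_Mapping.keys mo. Var i ^ lookup mo i) -
        (\<Prod>i\<in>Poly_Mapping.keys mo. Const (a i) ^ lookup mo i) \<in> ?J"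
    proof (rule prod_diff_in_ideal[OF J])
      fix i assume "i \<in> Poly_Mapping.keys mo"
      then have "i < c" using that by (auto simp: monomial_below_def)
      then have "Var i - Const (a i) \<in> ?J" by (auto intro: gen_ideal_base)
      then show "Var i ^ lookup mo i - Const (a i) ^ lookup mo i \<in> ?J"
        by (rule power_diff_in_ideal[OF J])
    qed
    ultimately show ?thesis by simp
  qed
  have "p - Const (eval_mpoly p a) =
     (\<Sum>mo\<in>Poly_Mapping.keys p. Const (lookup p mo) *
        ((\<Prod>i\<in>Poly_Mapping.keys mo. Var i ^ lookup mo i) - Const (monom_eval a mo)))"
  proof -
    have "p = (\<Sum>mo\<in>Poly_Mapping.keys p. Const (lookup p mo) * (\<Prod>i\<in>Poly_Mapping.keys mo. Var i ^ lookup mo i))"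
      by (subst poly_mapping_sum_single[of p]) (simp add: single_eq_Const_prod_Var)
    moreover have "Const (eval_mpoly p a) = (\<Sum>mo\<in>Poly_Mapping.keys p. Const (lookup p mo) * Const (monom_eval a mo))"
      by (simp add: eval_mpoly_monom_eval Const_sum Const_mult)
    ultimately show ?thesis by (simp add: right_diff_distrib sum_subtractf)
  qed
  also have "\<dots> \<in> ?J"
    using assms mono by (auto simp: in_P_iff_monomial_below intro!: ideal_sum[OF J] ideal_multl[OF J])
  finally show ?thesis .
qed

section \<open>Hilbert basis theorem\<close>

text \<open>\<open>var_coeff n j p\<close> is the coefficient of \<open>x\<^sub>n\<^sup>j\<close> in \<open>p\<close>, viewed as a polynomial in
  \<open>x\<^sub>n\<close>; \<open>var_degree n p\<close> is the degree of \<open>p\<close> in \<open>x\<^sub>n\<close> (a junk value for \<open>p = 0\<close>).\<close>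
definition var_coeff :: "nat \<Rightarrow> nat \<Rightarrow> 'a::comm_ring_1 mpoly \<Rightarrow> 'a mpoly" where
  "var_coeff n j p = Abs_poly_mapping (\<lambda>mo. if lookup mo n = 0 then lookup p (mo + single n j) else 0)"

lemma lookup_var_coeff: "lookup (var_coeff n j p) mo = (if lookup mo n = 0 then lookup p (mo + single n j) else 0)"
proof -
  have "{mo. (if lookup mo n = 0 then lookup p (mo + single n j) else 0) \<noteq> 0}
      \<subseteq> (\<lambda>T. T - single n j) ` Poly_Mapping.keys p"
  proof
    fix mo assume "mo \<in> {mo. (if lookup mo n = 0 then lookup p (mo + single n j) else 0) \<noteq> 0}"
    then have "mo + single n j \<in> Poly_Mapping.keys p" by (auto simp: in_keys_iff split: if_splits)
    then show "mo \<in> (\<lambda>T. T - single n j) ` Poly_Mapping.keys p"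
      by (intro image_eqI[of _ _ "mo + single n j"]) simp_all
  qed
  then have "finite {mo. (if lookup mo n = 0 then lookup p (mo + single n j) else 0) \<noteq> 0}"
    by (rule finite_subset) simp
  then show ?thesis unfolding var_coeff_def by simp
qed

lemma var_coeff_add: "var_coeff n j (p + q) = var_coeff n j p + var_coeff n j q"
  by (rule poly_mapping_eqI) (simp add: lookup_var_coeff lookup_add)

lemma var_coeff_diff: "var_coeff n j (p - q) = var_coeff n j p - var_coeff n j q"
  by (rule poly_mapping_eqI) (simp add: lookup_var_coeff lookup_minus)

lemma var_coeff_zero: "var_coeff n j 0 = 0"
  by (rule poly_mapping_eqI) (simp add: lookup_var_coeff)

lemma var_coeff_sum: "var_coeff n j (sum g A) = (\<Sum>x\<in>A. var_coeff n j (g x))"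
  by (induction A rule: infinite_finite_induct) (auto simp: var_coeff_zero var_coeff_add)

lemma var_coeff_single_mult:
  assumes "lookup a n = 0"
  shows "var_coeff n j (single a x * X) = single a x * var_coeff n j X"
proof (rule poly_mapping_eqI)
  fix mo
  show "lookup (var_coeff n j (single a x * X)) mo = lookup (single a x * var_coeff n j X) mo"
  proof (cases "lookup mo n = 0")
    case True
    have le: "(\<forall>i. lookup a i \<le> lookup (mo + single n j) i) \<longleftrightarrow> (\<forall>i. lookup a i \<le> lookup mo i)"
    proof
      assume h: "\<forall>i. lookup a i \<le> lookup (mo + single n j) i"
      show "\<forall>i. lookup a i \<le> lookup mo i"
      proof
        fix i show "lookup a i \<le> lookup mo i"
        proof (cases "i = n")
          case True then show ?thesis using assms by simp
        next
          case False then show ?thesis using h[rule_format, of i] by (simp add: lookup_add lookup_single)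
        qed
      qed
    next
      assume h: "\<forall>i. lookup a i \<le> lookup mo i"
      show "\<forall>i. lookup a i \<le> lookup (mo + single n j) i"
        using h by (simp add: lookup_add trans_le_add1)
    qed
    have eq: "(mo + single n j) - a = (mo - a) + single n j" if "\<forall>i. lookup a i \<le> lookup mo i"
      by (rule poly_mapping_eqI) (use that in \<open>simp add: lookup_add lookup_minus\<close>)
    have z: "lookup (mo - a) n = 0" using True assms by (simp add: lookup_minus)
    show ?thesis using True le eq z by (auto simp: lookup_var_coeff lookup_single_mult)
  next
    case False
    have "lookup (mo - a) n \<noteq> 0" using False assms by (simp add: lookup_minus)
    then show ?thesis using False by (auto simp: lookup_var_coeff lookup_single_mult)
  qed
qed

lemma var_coeff_mult_left:
  assumes "\<forall>mo\<in>Poly_Mapping.keys r. lookup mo n = 0"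
  shows "var_coeff n j (r * X) = r * var_coeff n j X"
proof -
  have "var_coeff n j (r * X) = (\<Sum>mo\<in>Poly_Mapping.keys r. var_coeff n j (single mo (lookup r mo) * X))"
    by (subst poly_mapping_sum_single[of r]) (simp add: sum_distrib_right var_coeff_sum)
  also have "\<dots> = (\<Sum>mo\<in>Poly_Mapping.keys r. single mo (lookup r mo) * var_coeff n j X)"
    by (rule sum.cong) (use assms in \<open>auto simp: var_coeff_single_mult\<close>)
  also have "\<dots> = r * var_coeff n j X"
    by (subst (2) poly_mapping_sum_single[of r]) (simp add: sum_distrib_right)
  finally show ?thesis .
qed

lemma var_coeff_Var_power_mult:
  assumes "e \<le> j"
  shows "var_coeff n j (Var n ^ e * X) = var_coeff n (j - e) X"
proof (rule poly_mapping_eqI)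
  fix mo
  have le: "\<forall>i. lookup (single n e) i \<le> lookup (mo + single n j) i"
    using assms by (simp add: lookup_add lookup_single when_def)
  have eq: "(mo + single n j) - single n e = mo + single n (j - e)"
    by (rule poly_mapping_eqI) (use assms in \<open>simp add: lookup_add lookup_minus lookup_single when_def\<close>)
  show "lookup (var_coeff n j (Var n ^ e * X)) mo = lookup (var_coeff n (j - e) X) mo"
    using le eq by (simp add: lookup_var_coeff Var_power lookup_single_mult)
qed

lemma in_P_var_coeff: "in_P (Suc n) p \<Longrightarrow> in_P n (var_coeff n j p)"
  unfolding in_P_iff_monomial_below
proof
  fix mo assume p: "\<forall>mo\<in>Poly_Mapping.keys p. monomial_below (Suc n) mo" and mo: "mo \<in> Poly_Mapping.keys (var_coeff n j p)"
  then have h: "lookup mo n = 0" "mo + single n j \<in> Poly_Mapping.keys p"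
    by (auto simp: lookup_var_coeff in_keys_iff split: if_splits)
  then have "monomial_below (Suc n) (mo + single n j)" using p by blast
  then have k: "\<And>i. Suc n \<le> i \<Longrightarrow> lookup (mo + single n j) i = 0" unfolding monomial_below_iff by blast
  show "monomial_below n mo" unfolding monomial_below_iff
  proof (intro allI impI)
    fix i assume "n \<le> i"
    show "lookup mo i = 0"
    proof (cases "i = n")
      case True then show ?thesis using h(1) by simp
    next
      case False
      then have "Suc n \<le> i" using \<open>n \<le> i\<close> by simp
      then show ?thesis using k[of i] by (simp add: lookup_add)
    qed
  qed
qed

definition var_degree :: "nat \<Rightarrow> 'a::comm_ring_1 mpoly \<Rightarrow> nat" where
  "var_degree n p = Max ((\<lambda>mo. lookup mo n) ` Poly_Mapping.keys p)"

lemma var_coeff_above_degree: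
  assumes "var_degree n p < j"
  shows "var_coeff n j p = 0"
proof (rule poly_mapping_eqI)
  fix mo
  show "lookup (var_coeff n j p) mo = lookup 0 mo"
  proof (rule ccontr)
    assume "lookup (var_coeff n j p) mo \<noteq> lookup 0 mo"
    then have h: "lookup mo n = 0" "mo + single n j \<in> Poly_Mapping.keys p"
      by (auto simp: lookup_var_coeff in_keys_iff split: if_splits)
    then have "lookup (mo + single n j) n \<le> var_degree n p" unfolding var_degree_def by simp
    then show False using h(1) assms by (simp add: lookup_add)
  qed
qed

lemma var_degree_less:
  assumes "p \<noteq> 0" "\<forall>j\<ge>d. var_coeff n j p = 0"
  shows "var_degree n p < d"
proof (rule ccontr)
  assume "\<not> var_degree n p < d"
  then have c0: "var_coeff n (var_degree n p) p = 0" using assms(2) by simp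
  have "var_degree n p \<in> (\<lambda>mo. lookup mo n) ` Poly_Mapping.keys p"
    unfolding var_degree_def using assms(1) by (intro Max_in) auto
  then obtain mo where mo: "mo \<in> Poly_Mapping.keys p" "lookup mo n = var_degree n p" by auto
  define mo' where "mo' = mo - single n (var_degree n p)"
  have "mo' + single n (var_degree n p) = mo"
    by (rule poly_mapping_eqI) (use mo(2) in \<open>auto simp: mo'_def lookup_add lookup_minus lookup_single when_def\<close>)
  moreover have "lookup mo' n = 0" using mo(2) by (simp add: mo'_def lookup_minus)
  ultimately have "lookup (var_coeff n (var_degree n p) p) mo' = lookup p mo" by (simp add: lookup_var_coeff)
  then show False using c0 mo(1) by (simp add: in_keys_iff)
qed

lemma in_P_0_eq_Const:
  assumes "in_P 0 F"
  shows "F = Const (lookup F 0)"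
proof (rule poly_mapping_eqI)
  fix mo
  have "mo \<in> Poly_Mapping.keys F \<Longrightarrow> mo = 0"
    using assms unfolding in_P_def by auto
  then show "lookup F mo = lookup (Const (lookup F 0)) mo"
    by (cases "mo = 0") (auto simp: Const_def lookup_single when_def in_keys_iff)
qed

lemma hilbert_basis_0:
  fixes S :: "'a::comm_ring_1 mpoly set"
  assumes "noetherian_ring TYPE('a)" and S: "\<forall>F\<in>S. in_P 0 F"
  shows "\<exists>S0. finite S0 \<and> S0 \<subseteq> S \<and> S \<subseteq> gen_ideal S0"
proof -
  define T where "T = (\<lambda>F. lookup F 0) ` S"
  obtain Fin where Fin: "finite Fin" "gen_ideal T = gen_ideal Fin"
    using assms(1) is_ideal_gen_ideal[of T] unfolding noetherian_ring_def by blast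
  have Fin_T: "Fin \<subseteq> gen_ideal T" "T \<subseteq> gen_ideal Fin"
    using Fin(2) gen_ideal_base by blast+
  obtain T0 where T0: "finite T0" "T0 \<subseteq> T" "T \<subseteq> gen_ideal T0"
    using finite_generating_subset[OF Fin(1) Fin_T] by (elim exE conjE)
  obtain S1 where S1: "S1 \<subseteq> S" "finite S1" "T0 = (\<lambda>F. lookup F 0) ` S1"
    using T0(1,2) finite_subset_image[of T0 "\<lambda>F. lookup F 0" S] unfolding T_def by blast
  have "S \<subseteq> gen_ideal S1"
  proof
    fix F assume F: "F \<in> S"
    then have "lookup F 0 \<in> gen_ideal ((\<lambda>F. lookup F 0) ` S1)" using T0(3) S1(3) T_def by blast
    then obtain r where r: "lookup F 0 = (\<Sum>G\<in>S1. r G * lookup G 0)"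
      using gen_ideal_image_subset_sums[OF S1(2), of "\<lambda>F. lookup F 0"] by blast
    have "F = Const (lookup F 0)" using S F in_P_0_eq_Const by blast
    also have "\<dots> = (\<Sum>G\<in>S1. Const (r G) * Const (lookup G 0))"
      by (simp add: r Const_sum Const_mult)
    also have "\<dots> = (\<Sum>G\<in>S1. Const (r G) * G)"
    proof (rule sum.cong)
      fix G assume "G \<in> S1"
      then have "G = Const (lookup G 0)" using S S1(1) in_P_0_eq_Const by blast
      then show "Const (r G) * Const (lookup G 0) = Const (r G) * G" by simp
    qed simp
    also have "\<dots> \<in> gen_ideal S1"
      by (intro ideal_sum[OF is_ideal_gen_ideal] ideal_multl[OF is_ideal_gen_ideal] gen_ideal_base)
    finally show "F \<in> gen_ideal S1" .
  qed
  then show ?thesis using S1 by blast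
qed

primrec greedy_prefix :: "('b list \<Rightarrow> 'b) \<Rightarrow> nat \<Rightarrow> 'b list" where
  "greedy_prefix g 0 = []"
| "greedy_prefix g (Suc k) = greedy_prefix g k @ [g (greedy_prefix g k)]"

lemma set_greedy_prefix: "set (greedy_prefix g k) = (\<lambda>i. g (greedy_prefix g i)) ` {..<k}"
  by (induction k) (auto simp: lessThan_Suc)

lemma greedy_sequence_exists:
  fixes \<mu> :: "'b \<Rightarrow> nat" and span :: "'b set \<Rightarrow> 'b set"
  assumes "\<And>A. finite A \<Longrightarrow> A \<subseteq> I \<Longrightarrow> \<not> I \<subseteq> span A"
  obtains F :: "nat \<Rightarrow> 'b" where "\<And>k. F k \<in> I - span (F ` {..<k})"
    and "\<And>k G. G \<in> I - span (F ` {..<k}) \<Longrightarrow> \<mu> (F k) \<le> \<mu> G"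
proof -
  define nxt where
    "nxt A = (SOME G. G \<in> I - span A \<and> (\<forall>G'\<in>I - span A. \<mu> G \<le> \<mu> G'))" for A
  have nxt: "nxt A \<in> I - span A \<and> (\<forall>G'\<in>I - span A. \<mu> (nxt A) \<le> \<mu> G')"
    if A: "finite A" "A \<subseteq> I" for A
  proof -
    obtain G0 where "G0 \<in> I - span A" using assms[OF A] by blast
    then have "\<exists>G. G \<in> I - span A \<and> (\<forall>G'. G' \<in> I - span A \<longrightarrow> \<mu> G \<le> \<mu> G')"
      by (rule ex_has_least_nat)
    then show ?thesis unfolding nxt_def Ball_def by (rule someI_ex)
  qed
  define F where "F k = nxt (set (greedy_prefix (nxt \<circ> set) k))" for k
  have F_eq: "F k = nxt (F ` {..<k})" for k
    using set_greedy_prefix[of "nxt \<circ> set" k] by (simp only: F_def[of k]) (simp add: F_def)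
  have F_in: "F ` {..<k} \<subseteq> I" for k
  proof (induction k)
    case (Suc k)
    then have "F k \<in> I" using nxt[of "F ` {..<k}"] F_eq[of k] by simp
    with Suc show ?case by (simp add: lessThan_Suc)
  qed simp
  have F_props: "F k \<in> I - span (F ` {..<k}) \<and> (\<forall>G\<in>I - span (F ` {..<k}). \<mu> (F k) \<le> \<mu> G)"
    for k using nxt[of "F ` {..<k}", folded F_eq] F_in[of k] by simp
  show thesis by (rule that[of F]) (use F_props in blast)+
qed

lemma sequence_eventually_combination:
  fixes g :: "nat \<Rightarrow> 'a::comm_ring_1 mpoly"
  assumes IH: "\<And>T::'a mpoly set. \<forall>F\<in>T. in_P n F \<Longrightarrow>
                 \<exists>T0. finite T0 \<and> T0 \<subseteq> T \<and> T \<subseteq> gen_ideal T0"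
    and g: "\<And>k. in_P n (g k)"
  shows "\<exists>N r. (\<forall>k. in_P n (r k)) \<and> g N = (\<Sum>k<N. r k * g k)"
proof -
  obtain L0 where L0: "finite L0" "L0 \<subseteq> range g" "range g \<subseteq> gen_ideal L0"
    using IH[of "range g"] g by blast
  obtain K0 where K0: "finite K0" "L0 = g ` K0"
    using finite_subset_image[OF L0(1,2)] by blast
  obtain N where N: "K0 \<subseteq> {..<N}"
    using K0(1) finite_nat_set_iff_bounded by (auto simp: subset_iff)
  have "g N \<in> gen_ideal (g ` K0)" using L0(3) K0(2) by blast
  also have "\<dots> \<subseteq> gen_ideal (g ` {..<N})" using N by (intro gen_ideal_mono) auto
  also have "\<dots> \<subseteq> {\<Sum>k<N. r k * g k | r. True}" by (rule gen_ideal_image_subset_sums) simp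
  finally obtain r where r: "g N = (\<Sum>k<N. r k * g k)" by blast
  have truncate_g: "truncate n (g k) = g k" for k
    using g in_P_iff_truncate by metis
  have "g N = truncate n (g N)" by (simp add: truncate_g)
  also have "\<dots> = (\<Sum>k<N. truncate n (r k) * g k)"
    by (simp add: r truncate_sum truncate_mult truncate_g)
  finally have "g N = (\<Sum>k<N. truncate n (r k) * g k)" .
  then show ?thesis
    by (intro exI[of _ N] exI[of _ "\<lambda>k. truncate n (r k)"]) (simp add: in_P_truncate)
qed

lemma var_coeff_cancel_leading:
  fixes F :: "'a::comm_ring_1 mpoly" and G :: "nat \<Rightarrow> 'a mpoly"
  assumes deg: "var_degree n F = d" "\<forall>k<N. var_degree n (G k) \<le> d"
    and r: "\<forall>k. in_P n (r k)"
    and lc: "var_coeff n d F = (\<Sum>k<N. r k * var_coeff n (var_degree n (G k)) (G k))"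
    and "d \<le> j"
  shows "var_coeff n j (F - (\<Sum>k<N. r k * (Var n ^ (d - var_degree n (G k)) * G k))) = 0"
proof -
  let ?e = "\<lambda>k. d - var_degree n (G k)"
  have "var_coeff n j (r k * (Var n ^ ?e k * G k)) = r k * var_coeff n (j - ?e k) (G k)" for k
    using var_coeff_mult_left[OF in_P_lookup_eq_0[OF r[rule_format]]]
      var_coeff_Var_power_mult[of "?e k" j n "G k"] \<open>d \<le> j\<close> by simp
  then have "var_coeff n j (F - (\<Sum>k<N. r k * (Var n ^ ?e k * G k))) =
      var_coeff n j F - (\<Sum>k<N. r k * var_coeff n (j - ?e k) (G k))"
    by (simp add: var_coeff_diff var_coeff_sum)
  also have "\<dots> = 0"
  proof (cases "j = d")
    case True
    then show ?thesis using lc deg(2) by (simp add: diff_diff_cancel)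
  next
    case False
    with \<open>d \<le> j\<close> have "d < j" by simp
    then have "var_coeff n (j - ?e k) (G k) = 0" if "k < N" for k
      using deg(2) that by (intro var_coeff_above_degree) fastforce
    moreover have "var_coeff n j F = 0"
      using \<open>d < j\<close> deg(1) by (intro var_coeff_above_degree) simp
    ultimately show ?thesis by simp
  qed
  finally show ?thesis .
qed

lemma leading_term_reduction:
  fixes F :: "nat \<Rightarrow> 'a::comm_ring_1 mpoly"
  assumes F: "\<And>k. in_P (Suc n) (F k)"
    and deg: "\<forall>k<N. var_degree n (F k) \<le> var_degree n (F N)"
    and r: "\<forall>k. in_P n (r k)"
    and lc: "var_coeff n (var_degree n (F N)) (F N) =
               (\<Sum>k<N. r k * var_coeff n (var_degree n (F k)) (F k))"
  shows "\<exists>G. F N - G \<in> gen_ideal (F ` {..<N}) \<and> in_P (Suc n) G \<and>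
             (\<forall>j\<ge>var_degree n (F N). var_coeff n j G = 0)"
proof -
  define d where "d = var_degree n (F N)"
  define Sub where "Sub = (\<Sum>k<N. r k * (Var n ^ (d - var_degree n (F k)) * F k))"
  have "F N - (F N - Sub) \<in> gen_ideal (F ` {..<N})" unfolding Sub_def
    by (simp, intro ideal_sum[OF is_ideal_gen_ideal] ideal_multl[OF is_ideal_gen_ideal] gen_ideal_base) auto
  moreover have "in_P (Suc n) (F N - Sub)" unfolding Sub_def using F r
    by (intro in_P_diff in_P_sum in_P_mult in_P_power in_P_Var) (auto intro: in_P_mono[of n "Suc n"])
  moreover have "\<forall>j\<ge>d. var_coeff n j (F N - Sub) = 0"
    unfolding Sub_def using deg r lc by (intro allI impI var_coeff_cancel_leading) (auto simp: d_def)
  ultimately show ?thesis unfolding d_def by (intro exI[of _ "F N - Sub"]) blast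
qed

text \<open>Cancelling the leading term in \<open>x\<^sub>n\<close> of \<open>F N\<close> by the leading coefficients of its
  predecessors, which generate that of \<open>F N\<close> by the induction hypothesis, yields an element of
  smaller degree that is still outside the ideal of \<open>F 0, \<dots>, F (N - 1)\<close>.\<close>
lemma no_greedy_sequence:
  fixes S :: "'a::comm_ring_1 mpoly set" and F :: "nat \<Rightarrow> 'a mpoly" and n :: nat
  defines "I \<equiv> gen_ideal S \<inter> {p. in_P (Suc n) p}"
  assumes IH: "\<And>T::'a mpoly set. \<forall>F\<in>T. in_P n F \<Longrightarrow>
                 \<exists>T0. finite T0 \<and> T0 \<subseteq> T \<and> T \<subseteq> gen_ideal T0"
    and F: "\<And>k. F k \<in> I - gen_ideal (F ` {..<k})"
    and F_min: "\<And>k G. G \<in> I - gen_ideal (F ` {..<k}) \<Longrightarrow> var_degree n (F k) \<le> var_degree n G"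
  shows False
proof -
  have F_in: "F k \<in> gen_ideal S" "in_P (Suc n) (F k)" for k
    using F[of k] unfolding I_def by auto
  define LC where "LC k = var_coeff n (var_degree n (F k)) (F k)" for k
  have "in_P n (LC k)" for k
    unfolding LC_def using F_in(2) by (rule in_P_var_coeff)
  then obtain N r where r: "\<forall>k. in_P n (r k)" and LC_N: "LC N = (\<Sum>k<N. r k * LC k)"
    using sequence_eventually_combination[OF IH] by blast
  have "var_degree n (F k) \<le> var_degree n (F N)" if "k < N" for k
  proof (rule F_min)
    have "gen_ideal (F ` {..<k}) \<subseteq> gen_ideal (F ` {..<N})" using that by (intro gen_ideal_mono) auto
    then show "F N \<in> I - gen_ideal (F ` {..<k})" using F[of N] by blast
  qed
  then obtain G where G: "F N - G \<in> gen_ideal (F ` {..<N})" "in_P (Suc n) G"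
      and G_deg: "\<forall>j\<ge>var_degree n (F N). var_coeff n j G = 0"
    using leading_term_reduction[OF F_in(2) _ r LC_N[unfolded LC_def]] by blast
  have G_notin: "G \<notin> gen_ideal (F ` {..<N})"
  proof
    assume "G \<in> gen_ideal (F ` {..<N})"
    then have "F N - G + G \<in> gen_ideal (F ` {..<N})"
      using G(1) ideal_add[OF is_ideal_gen_ideal] by blast
    then show False using F[of N] by simp
  qed
  have "gen_ideal (F ` {..<N}) \<subseteq> gen_ideal S"
    using F_in(1) by (intro gen_ideal_subset_gen_ideal) auto
  then have "F N - (F N - G) \<in> gen_ideal S"
    using G(1) F_in(1) ideal_diff[OF is_ideal_gen_ideal] by blast
  then have "G \<in> I - gen_ideal (F ` {..<N})" using G(2) G_notin unfolding I_def by simp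
  then have "var_degree n (F N) \<le> var_degree n G" by (rule F_min)
  moreover have "G \<noteq> 0" using G_notin ideal_zero[OF is_ideal_gen_ideal] by metis
  with G_deg have "var_degree n G < var_degree n (F N)" by (rule var_degree_less[rotated])
  ultimately show False by simp
qed

lemma hilbert_basis_Suc:
  fixes S :: "'a::comm_ring_1 mpoly set"
  assumes IH: "\<And>T::'a mpoly set. \<forall>F\<in>T. in_P n F \<Longrightarrow>
                 \<exists>T0. finite T0 \<and> T0 \<subseteq> T \<and> T \<subseteq> gen_ideal T0"
    and S: "\<forall>F\<in>S. in_P (Suc n) F"
  shows "\<exists>S0. finite S0 \<and> S0 \<subseteq> S \<and> S \<subseteq> gen_ideal S0"
proof -
  define I where "I = gen_ideal S \<inter> {p. in_P (Suc n) p}"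
  have "\<exists>A. finite A \<and> A \<subseteq> I \<and> I \<subseteq> gen_ideal A"
  proof (rule ccontr)
    assume "\<nexists>A. finite A \<and> A \<subseteq> I \<and> I \<subseteq> gen_ideal A"
    then have no_basis: "\<not> I \<subseteq> gen_ideal A" if "finite A" "A \<subseteq> I" for A
      using that by blast
    obtain F :: "nat \<Rightarrow> 'a mpoly" where "\<And>k. F k \<in> I - gen_ideal (F ` {..<k})"
      and "\<And>k G. G \<in> I - gen_ideal (F ` {..<k}) \<Longrightarrow> var_degree n (F k) \<le> var_degree n G"
      using greedy_sequence_exists[of I gen_ideal "var_degree n", OF no_basis] by blast
    then show False using no_greedy_sequence[OF IH] unfolding I_def by blast
  qed
  then obtain A where A: "finite A" "A \<subseteq> I" "I \<subseteq> gen_ideal A" by blast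
  have "A \<subseteq> gen_ideal S" using A(2) unfolding I_def by blast
  moreover have "S \<subseteq> gen_ideal A" using S gen_ideal_base A(3) unfolding I_def by blast
  ultimately show ?thesis by (rule finite_generating_subset[OF A(1)])
qed

lemma hilbert_basis:
  fixes S :: "'a::comm_ring_1 mpoly set"
  assumes "noetherian_ring TYPE('a)" and "\<forall>F\<in>S. in_P n F"
  shows "\<exists>S0. finite S0 \<and> S0 \<subseteq> S \<and> S \<subseteq> gen_ideal S0"
  using assms(2)
proof (induction n arbitrary: S)
  case 0
  then show ?case using hilbert_basis_0[OF assms(1)] by blast
next
  case (Suc n)
  then show ?case using hilbert_basis_Suc by blast
qed

section \<open>Koszul matrix factorizations\<close>

text \<open>A matrix is a function \<open>nat \<Rightarrow> nat \<Rightarrow> 'b\<close>, read as an \<open>N \<times> N\<close> matrix by ignoring the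
  entries outside \<open>{..<N} \<times> {..<N}\<close>; \<open>block_mat N A B C D\<close> is the \<open>2N \<times> 2N\<close> matrix
  with blocks \<open>A, B\<close> above \<open>C, D\<close>.\<close>
definition mat_mult :: "nat \<Rightarrow> (nat \<Rightarrow> nat \<Rightarrow> 'b::comm_ring_1) \<Rightarrow> (nat \<Rightarrow> nat \<Rightarrow> 'b) \<Rightarrow> nat \<Rightarrow> nat \<Rightarrow> 'b" where
  "mat_mult N X Y i j = (\<Sum>k<N. X i k * Y k j)"

definition scalar_mat :: "nat \<Rightarrow> 'b::comm_ring_1 \<Rightarrow> nat \<Rightarrow> nat \<Rightarrow> 'b" where
  "scalar_mat N c i j = (if i < N \<and> j < N \<and> i = j then c else 0)"

definition mat_bounded :: "nat \<Rightarrow> (nat \<Rightarrow> nat \<Rightarrow> 'b::zero) \<Rightarrow> bool" where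
  "mat_bounded N X \<longleftrightarrow> (\<forall>i j. N \<le> i \<or> N \<le> j \<longrightarrow> X i j = 0)"

definition block_mat :: "nat \<Rightarrow> (nat \<Rightarrow> nat \<Rightarrow> 'b::zero) \<Rightarrow> (nat \<Rightarrow> nat \<Rightarrow> 'b) \<Rightarrow> (nat \<Rightarrow> nat \<Rightarrow> 'b)
   \<Rightarrow> (nat \<Rightarrow> nat \<Rightarrow> 'b) \<Rightarrow> nat \<Rightarrow> nat \<Rightarrow> 'b" where
  "block_mat N A B C D i j =
    (if i < N then (if j < N then A i j else if j < 2 * N then B i (j - N) else 0)
     else if i < 2 * N then (if j < N then C (i - N) j else if j < 2 * N then D (i - N) (j - N) else 0)
     else 0)"

lemma sum_lessThan_double:
  fixes f :: "nat \<Rightarrow> 'b::comm_monoid_add"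
  shows "sum f {..<2 * N} = sum f {..<N} + (\<Sum>k<N. f (N + k))"
proof -
  have "sum f {..<2 * N} = sum f ({..<N} \<union> {N..<N + N})"
    by (rule arg_cong[where f="sum f"]) auto
  also have "\<dots> = sum f {..<N} + sum f {N..<N + N}"
    by (rule sum.union_disjoint) auto
  finally have "sum f {..<2 * N} = sum f {..<N} + sum f {N..<N + N}" .
  moreover have "sum f {N..<N + N} = (\<Sum>k<N. f (N + k))"
    using sum.shift_bounds_nat_ivl[of f 0 N N] by (simp add: atLeast0LessThan add.commute)
  ultimately show ?thesis by simp
qed

lemma block_mat_mult:
  "mat_mult (2 * N) (block_mat N A B C D) (block_mat N A' B' C' D') i j =
   block_mat N (\<lambda>i j. mat_mult N A A' i j + mat_mult N B C' i j) (\<lambda>i j. mat_mult N A B' i j + mat_mult N B D' i j)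
         (\<lambda>i j. mat_mult N C A' i j + mat_mult N D C' i j) (\<lambda>i j. mat_mult N C B' i j + mat_mult N D D' i j) i j"
proof -
  have L: "block_mat N A B C D i k = (if i < N then A i k else if i < 2 * N then C (i - N) k else 0)"
    if "k < N" for k using that by (simp add: block_mat_def)
  have L2: "block_mat N A B C D i (N + k) = (if i < N then B i k else if i < 2 * N then D (i - N) k else 0)"
    if "k < N" for k using that by (simp add: block_mat_def)
  have R: "block_mat N A' B' C' D' k j = (if j < N then A' k j else if j < 2 * N then B' k (j - N) else 0)"
    if "k < N" for k using that by (simp add: block_mat_def)
  have R2: "block_mat N A' B' C' D' (N + k) j = (if j < N then C' k j else if j < 2 * N then D' k (j - N) else 0)"
    if "k < N" for k using that by (simp add: block_mat_def)
  have "mat_mult (2 * N) (block_mat N A B C D) (block_mat N A' B' C' D') i j =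
      (\<Sum>k<N. block_mat N A B C D i k * block_mat N A' B' C' D' k j) +
      (\<Sum>k<N. block_mat N A B C D i (N + k) * block_mat N A' B' C' D' (N + k) j)"
    unfolding mat_mult_def by (rule sum_lessThan_double)
  also have "\<dots> = (\<Sum>k<N. (if i < N then A i k else if i < 2 * N then C (i - N) k else 0) *
                          (if j < N then A' k j else if j < 2 * N then B' k (j - N) else 0)) +
      (\<Sum>k<N. (if i < N then B i k else if i < 2 * N then D (i - N) k else 0) *
              (if j < N then C' k j else if j < 2 * N then D' k (j - N) else 0))"
    by (intro arg_cong2[where f="(+)"] sum.cong) (simp_all add: L L2 R R2)
  also have "\<dots> = block_mat N (\<lambda>i j. mat_mult N A A' i j + mat_mult N B C' i j) (\<lambda>i j. mat_mult N A B' i j + mat_mult N B D' i j)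
         (\<lambda>i j. mat_mult N C A' i j + mat_mult N D C' i j) (\<lambda>i j. mat_mult N C B' i j + mat_mult N D D' i j) i j"
    by (simp add: block_mat_def mat_mult_def)
  finally show ?thesis .
qed

lemma mat_mult_scalar_right: "mat_mult N X (scalar_mat N c) i j = (if j < N then X i j * c else 0)"
proof -
  have "mat_mult N X (scalar_mat N c) i j = (\<Sum>k<N. if k = j then (if j < N then X i j * c else 0) else 0)"
    unfolding mat_mult_def scalar_mat_def by (rule sum.cong) auto
  then show ?thesis by (simp add: sum.delta)
qed

lemma mat_mult_scalar_left: "mat_mult N (scalar_mat N c) X i j = (if i < N then c * X i j else 0)"
proof -
  have "mat_mult N (scalar_mat N c) X i j = (\<Sum>k<N. if k = i then (if i < N then c * X i j else 0) else 0)"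
    unfolding mat_mult_def scalar_mat_def by (rule sum.cong) auto
  then show ?thesis by (simp add: sum.delta)
qed

lemma mat_mult_zero_right: "mat_mult N X (\<lambda>_ _. 0) i j = 0" by (simp add: mat_mult_def)

lemma mat_mult_zero_left: "mat_mult N (\<lambda>_ _. 0) X i j = 0" by (simp add: mat_mult_def)

lemma mat_mult_uminus_right: "mat_mult N X (\<lambda>i j. - Y i j) i j = - mat_mult N X Y i j" by (simp add: mat_mult_def sum_negf)

lemma mat_mult_uminus_left: "mat_mult N (\<lambda>i j. - Y i j) X i j = - mat_mult N Y X i j" by (simp add: mat_mult_def sum_negf)

lemma mat_mult_transpose: "mat_mult N (\<lambda>i j. X j i) (\<lambda>i j. Y j i) i j = mat_mult N Y X j i"
  unfolding mat_mult_def by (rule sum.cong) (simp_all add: mult.commute)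

lemma sum_mult_sum_swap:
  fixes a :: "nat \<Rightarrow> 'b::comm_ring_1"
  shows "(\<Sum>j<N. a j * (\<Sum>k<N. b j k * c k)) = (\<Sum>k<N. (\<Sum>j<N. a j * b j k) * c k)"
proof -
  have "(\<Sum>j<N. a j * (\<Sum>k<N. b j k * c k)) = (\<Sum>j<N. \<Sum>k<N. a j * b j k * c k)"
    by (simp add: sum_distrib_left mult.assoc)
  also have "\<dots> = (\<Sum>k<N. \<Sum>j<N. a j * b j k * c k)" by (rule sum.swap)
  also have "\<dots> = (\<Sum>k<N. (\<Sum>j<N. a j * b j k) * c k)" by (simp add: sum_distrib_right)
  finally show ?thesis .
qed

text \<open>For factor pairs \<open>(p, q)\<close> of degrees \<open>e\<close> and \<open>1 - e\<close>, \<open>koszul_mat\<close> is the tensor product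
  of the rank-one matrix factorizations \<open>(p, q)\<close>: prepending \<open>(p, q)\<close> to \<open>L\<close> turns \<open>K\<close> into
  \<open>[K, q; p, -K]\<close>.  Its square is the sum of the products \<open>p q\<close>.  The basis vector \<open>j\<close> of
  the \<open>n\<close>-th module sits in degree \<open>koszul_deg L n j\<close>; the summand \<open>n div 2\<close> gives the
  periodicity \<open>C\<^sub>n\<^sub>+\<^sub>2 = C\<^sub>n(-1)\<close> that is forced because \<open>w\<close> has degree 1.\<close>
fun koszul_mat :: "('b::comm_ring_1 \<times> 'b \<times> int) list \<Rightarrow> nat \<Rightarrow> nat \<Rightarrow> 'b" where
  "koszul_mat [] = (\<lambda>i j. 0)"
| "koszul_mat ((p, q, e) # L) = block_mat (2 ^ length L) (koszul_mat L) (scalar_mat (2 ^ length L) q) (scalar_mat (2 ^ length L) p)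
      (\<lambda>i j. - koszul_mat L i j)"

fun koszul_deg :: "('b \<times> 'b \<times> int) list \<Rightarrow> int \<Rightarrow> nat \<Rightarrow> int" where
  "koszul_deg [] n j = n div 2"
| "koszul_deg ((p, q, e) # L) n j = (if j < 2 ^ length L then koszul_deg L n j else koszul_deg L (n + 1) (j - 2 ^ length L) - e)"

lemma koszul_mat_bounded: "mat_bounded (2 ^ length L) (koszul_mat L)"
proof (induction L)
  case Nil then show ?case by (simp add: mat_bounded_def)
next
  case (Cons t L) then show ?case
    by (cases t) (auto simp: mat_bounded_def block_mat_def)
qed

lemma koszul_mat_entry_pred:
  assumes "P 0" "\<And>x. P x \<Longrightarrow> P (- x)" "\<forall>(p, q, e)\<in>set L. P p \<and> P q"
  shows "P (koszul_mat L i j)"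
  using assms(3)
proof (induction L arbitrary: i j)
  case Nil then show ?case using assms(1) by simp
next
  case (Cons t L)
  obtain p q e where t: "t = (p, q, e)" by (cases t)
  then show ?case using Cons assms(1,2) by (auto simp: block_mat_def scalar_mat_def)
qed

lemma koszul_mat_square:
  "mat_mult (2 ^ length L) (koszul_mat L) (koszul_mat L) i j =
   scalar_mat (2 ^ length L) (\<Sum>(p, q, e)\<leftarrow>L. p * q) i j"
proof (induction L arbitrary: i j)
  case Nil then show ?case by (simp add: mat_mult_def scalar_mat_def)
next
  case (Cons t L)
  obtain p q e where t: "t = (p, q, e)" by (cases t)
  let ?N = "2 ^ length L"
  let ?s = "(\<Sum>(p, q, e)\<leftarrow>L. p * q)"
  have bK: "koszul_mat L a b = 0" if "?N \<le> a \<or> ?N \<le> b" for a b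
    using koszul_mat_bounded[of L] that unfolding mat_bounded_def by blast
  have e2: "(2::nat) ^ length (t # L) = 2 * ?N" by simp
  show ?case
    unfolding e2 unfolding t koszul_mat.simps
    apply (subst block_mat_mult)
    using Cons.IH bK
    by (auto simp: block_mat_def mat_mult_scalar_right mat_mult_scalar_left mat_mult_uminus_right mat_mult_uminus_left scalar_mat_def algebra_simps)
qed

lemma koszul_deg_shift: "koszul_deg L (n + 2) j = koszul_deg L n j + 1"
proof (induction L arbitrary: n j)
  case Nil then show ?case by simp
next
  case (Cons t L)
  obtain p q e where t: "t = (p, q, e)" by (cases t)
  show ?case using Cons.IH[of "n + 1"] Cons.IH[of n] unfolding t by (simp add: algebra_simps)
qed

lemma koszul_mat_homogeneous:
  assumes "\<forall>(p, q, e)\<in>set L. homogeneous p e \<and> homogeneous q (1 - e)"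
    "i < 2 ^ length L" "j < 2 ^ length L"
  shows "homogeneous (koszul_mat L i j) (koszul_deg L n j - koszul_deg L (n - 1) i)"
  using assms
proof (induction L arbitrary: n i j)
  case Nil then show ?case by (simp add: homogeneous_zero)
next
  case (Cons t L)
  obtain p q e where t: "t = (p, q, e)" by (cases t)
  let ?N = "2 ^ length L"
  have hp: "homogeneous p e" and hq: "homogeneous q (1 - e)"
    and hL: "\<forall>(p, q, e)\<in>set L. homogeneous p e \<and> homogeneous q (1 - e)"
    using Cons.prems(1) t by auto
  have i2: "i < 2 * ?N" and j2: "j < 2 * ?N" using Cons.prems(2,3) by auto
  show ?case
  proof (cases "i < ?N")
    case iN: True
    show ?thesis
    proof (cases "j < ?N")
      case True
      then show ?thesis using iN Cons.IH[OF hL iN True, of n] t by (simp add: block_mat_def)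
    next
      case False
      have sh: "koszul_deg L (n + 1) i = koszul_deg L (n - 1) i + 1"
        using koszul_deg_shift[of L "n - 1" i] by (simp add: algebra_simps)
      show ?thesis using iN False j2 t sh hq
        by (auto simp: block_mat_def scalar_mat_def homogeneous_zero)
    qed
  next
    case iN: False
    show ?thesis
    proof (cases "j < ?N")
      case True
      show ?thesis using iN True i2 t hp
        by (auto simp: block_mat_def scalar_mat_def homogeneous_zero)
    next
      case False
      have "homogeneous (koszul_mat L (i - ?N) (j - ?N))
          (koszul_deg L (n + 1) (j - ?N) - koszul_deg L (n + 1 - 1) (i - ?N))"
        by (rule Cons.IH[OF hL]) (use i2 j2 iN False in auto)
      then show ?thesis using iN False i2 j2 t
        by (auto simp: block_mat_def homogeneous_uminus)
    qed
  qed
qed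

definition contracting_homotopy ::
  "'b::comm_ring_1 set \<Rightarrow> nat \<Rightarrow> (nat \<Rightarrow> nat \<Rightarrow> 'b) \<Rightarrow> (nat \<Rightarrow> nat \<Rightarrow> 'b) \<Rightarrow> bool" where
  "contracting_homotopy J N K H \<longleftrightarrow>
     (\<forall>i<N. \<forall>j<N. mat_mult N K H i j + mat_mult N H K i j - scalar_mat N 1 i j \<in> J)"

lemma koszul_mat_Cons_contraction_head:
  assumes J: "is_ideal J" and u: "u * p - 1 \<in> J"
  shows "contracting_homotopy J (2 * 2 ^ length L) (koszul_mat ((p, q, e) # L))
           (block_mat (2 ^ length L) (\<lambda>_ _. 0) (scalar_mat (2 ^ length L) u) (\<lambda>_ _. 0) (\<lambda>_ _. 0))"
  unfolding contracting_homotopy_def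
proof (intro allI impI)
  let ?N = "2 ^ length L" and ?K = "koszul_mat ((p, q, e) # L)"
  let ?H = "block_mat ?N (\<lambda>_ _. 0) (scalar_mat ?N u) (\<lambda>_ _. 0) (\<lambda>_ _. 0)"
  have bK: "koszul_mat L a b = 0" if "?N \<le> a \<or> ?N \<le> b" for a b
    using koszul_mat_bounded[of L] that unfolding mat_bounded_def by blast
  fix i j :: nat assume ij: "i < 2 * ?N" "j < 2 * ?N"
  have "mat_mult (2 * ?N) ?K ?H i j + mat_mult (2 * ?N) ?H ?K i j - scalar_mat (2 * ?N) 1 i j =
      (if i = j then u * p - 1 else 0)"
    unfolding koszul_mat.simps
    apply (subst block_mat_mult)+
    using ij bK
    by (auto simp: block_mat_def mat_mult_scalar_right mat_mult_scalar_left mat_mult_zero_right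
        mat_mult_zero_left mat_mult_uminus_right mat_mult_uminus_left scalar_mat_def algebra_simps)
  then show "mat_mult (2 * ?N) ?K ?H i j + mat_mult (2 * ?N) ?H ?K i j - scalar_mat (2 * ?N) 1 i j \<in> J"
    using u ideal_zero[OF J] by simp
qed

lemma koszul_mat_Cons_contraction_tail:
  assumes J: "is_ideal J" and H: "contracting_homotopy J (2 ^ length L) (koszul_mat L) H"
  shows "contracting_homotopy J (2 * 2 ^ length L) (koszul_mat ((p, q, e) # L))
           (block_mat (2 ^ length L) H (\<lambda>_ _. 0) (\<lambda>_ _. 0) (\<lambda>i j. - H i j))"
  unfolding contracting_homotopy_def
proof (intro allI impI)
  let ?N = "2 ^ length L" and ?K = "koszul_mat ((p, q, e) # L)"
  let ?H = "block_mat ?N H (\<lambda>_ _. 0) (\<lambda>_ _. 0) (\<lambda>i j. - H i j)"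
  let ?D = "\<lambda>i j. mat_mult ?N (koszul_mat L) H i j + mat_mult ?N H (koszul_mat L) i j - scalar_mat ?N 1 i j"
  have bK: "koszul_mat L a b = 0" if "?N \<le> a \<or> ?N \<le> b" for a b
    using koszul_mat_bounded[of L] that unfolding mat_bounded_def by blast
  fix i j :: nat assume ij: "i < 2 * ?N" "j < 2 * ?N"
  have "mat_mult (2 * ?N) ?K ?H i j + mat_mult (2 * ?N) ?H ?K i j - scalar_mat (2 * ?N) 1 i j =
      (if i < ?N \<and> j < ?N then ?D i j
       else if ?N \<le> i \<and> ?N \<le> j then ?D (i - ?N) (j - ?N) else 0)"
    unfolding koszul_mat.simps
    apply (subst block_mat_mult)+
    using ij bK
    by (auto simp: block_mat_def mat_mult_scalar_right mat_mult_scalar_left mat_mult_zero_right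
        mat_mult_zero_left mat_mult_uminus_right mat_mult_uminus_left scalar_mat_def algebra_simps)
  then show "mat_mult (2 * ?N) ?K ?H i j + mat_mult (2 * ?N) ?H ?K i j - scalar_mat (2 * ?N) 1 i j \<in> J"
    using H ij ideal_zero[OF J] unfolding contracting_homotopy_def by auto
qed

text \<open>If \<open>p\<close> is a unit modulo \<open>J\<close>, the rank-one factorization \<open>(p, q)\<close> is contractible, and a
  contraction of one tensor factor extends blockwise to the tensor product.\<close>
lemma koszul_mat_contraction:
  fixes L :: "('b::comm_ring_1 \<times> 'b \<times> int) list"
  assumes J: "is_ideal J" and P0: "P 0" and Pn: "\<And>x. P x \<Longrightarrow> P (- x)"
    and ex: "\<exists>(p, q, e)\<in>set L. \<exists>u. u * p - 1 \<in> J \<and> P u"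
  shows "\<exists>H. (\<forall>i j. P (H i j)) \<and> contracting_homotopy J (2 ^ length L) (koszul_mat L) H"
  using ex
proof (induction L)
  case Nil then show ?case by simp
next
  case (Cons t L)
  obtain p q e where t: "t = (p, q, e)" by (cases t)
  let ?N = "2 ^ length L"
  show ?case
  proof (cases "\<exists>u. u * p - 1 \<in> J \<and> P u")
    case True
    then obtain u where u: "u * p - 1 \<in> J" "P u" by blast
    let ?H = "block_mat ?N (\<lambda>_ _. 0) (scalar_mat ?N u) (\<lambda>_ _. 0) (\<lambda>_ _. 0)"
    have "P (?H i j)" for i j using P0 u(2) by (simp add: block_mat_def scalar_mat_def)
    then show ?thesis
      using koszul_mat_Cons_contraction_head[OF J u(1), of L q e] unfolding t by auto
  next
    case False
    then have "\<exists>(p, q, e)\<in>set L. \<exists>u. u * p - 1 \<in> J \<and> P u" using Cons.prems t by auto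
    then obtain H where H: "\<forall>i j. P (H i j)" "contracting_homotopy J ?N (koszul_mat L) H"
      using Cons.IH by blast
    let ?H = "block_mat ?N H (\<lambda>_ _. 0) (\<lambda>_ _. 0) (\<lambda>i j. - H i j)"
    have "P (?H i j)" for i j using P0 Pn H(1) by (simp add: block_mat_def)
    then show ?thesis
      using koszul_mat_Cons_contraction_tail[OF J H(2), of p q e] unfolding t by auto
  qed
qed

text \<open>If \<open>X v = w r\<close>, then \<open>y = v - X r\<close> satisfies \<open>X y = 0\<close> because \<open>X X = w\<close>; hence
  \<open>w y = X X y = 0\<close>, and \<open>y = 0\<close> since \<open>w\<close> is a nonzerodivisor.\<close>
lemma matrix_factorization_kernel:
  fixes X :: "nat \<Rightarrow> nat \<Rightarrow> 'b::comm_ring_1"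
  assumes sq: "\<And>i j. mat_mult N X X i j = scalar_mat N w i j"
    and nzd: "\<And>y. w * y = 0 \<Longrightarrow> y = 0"
    and r: "\<And>i. i < N \<Longrightarrow> (\<Sum>j<N. X i j * v j) = r i * w"
    and "j < N"
  shows "v j = (\<Sum>k<N. X j k * r k)"
proof -
  define y where "y j = v j - (\<Sum>k<N. X j k * r k)" for j
  have square_apply: "(\<Sum>j<N. X i j * (\<Sum>k<N. X j k * z k)) = w * z i" if "i < N" for i z
  proof -
    have "(\<Sum>j<N. X i j * (\<Sum>k<N. X j k * z k)) = (\<Sum>k<N. mat_mult N X X i k * z k)"
      by (simp add: sum_mult_sum_swap mat_mult_def)
    also have "\<dots> = (\<Sum>k<N. if k = i then w * z i else 0)"
      by (rule sum.cong) (use that in \<open>auto simp: sq scalar_mat_def\<close>)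
    finally show ?thesis using that by (simp add: sum.delta)
  qed
  have Xy: "(\<Sum>j<N. X i j * y j) = 0" if "i < N" for i
    using square_apply[OF that, of r] r[OF that]
    by (simp add: y_def right_diff_distrib sum_subtractf mult.commute)
  have "w * y j = 0"
    using square_apply[OF \<open>j < N\<close>, of y] by (simp add: Xy)
  then have "y j = 0" by (rule nzd)
  then show ?thesis by (simp add: y_def)
qed

lemma matrix_factorization_exact:
  fixes X :: "nat \<Rightarrow> nat \<Rightarrow> 'a::comm_ring_1 mpoly"
  assumes sq: "\<And>i j. mat_mult N X X i j = scalar_mat N w i j"
    and XP: "\<And>i j. in_P c (X i j)"
    and nzd: "\<And>y. w * y = 0 \<Longrightarrow> y = 0"
    and vP: "\<forall>j. in_P c (v j)"
    and cyc: "\<forall>i<N. (\<Sum>j<N. X i j * v j) - 0 \<in> gen_ideal {w}"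
  shows "\<exists>u. (\<forall>k. in_P c (u k)) \<and> (\<forall>j<N. v j - (\<Sum>k<N. X j k * u k) \<in> gen_ideal {w})"
proof -
  have "\<forall>i. \<exists>r. i < N \<longrightarrow> (\<Sum>j<N. X i j * v j) = r * w"
    using cyc by (auto simp: gen_ideal_singleton)
  then obtain r where r: "\<And>i. i < N \<Longrightarrow> (\<Sum>j<N. X i j * v j) = r i * w" by metis
  have "v j = (\<Sum>k<N. X j k * truncate c (r k))" if "j < N" for j
  proof -
    have truncate_in_P: "truncate c p = p" if "in_P c p" for p
      using that in_P_iff_truncate by blast
    have "v j = truncate c (\<Sum>k<N. X j k * r k)"
      using matrix_factorization_kernel[OF sq nzd r that] vP truncate_in_P by metis
    also have "\<dots> = (\<Sum>k<N. X j k * truncate c (r k))"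
      by (simp add: truncate_sum truncate_mult truncate_in_P XP)
    finally show ?thesis .
  qed
  then show ?thesis
    using in_P_truncate ideal_zero[OF is_ideal_gen_ideal]
    by (intro exI[of _ "\<lambda>k. truncate c (r k)"]) auto
qed

definition koszul_complex :: "('a::comm_ring_1 mpoly \<times> 'a mpoly \<times> int) list \<Rightarrow> 'a gcomplex" where
  "koszul_complex L = ((\<lambda>_. 2 ^ length L), koszul_deg L, (\<lambda>_. koszul_mat L))"

lemma koszul_complex_simps:
  "rk (koszul_complex L) n = 2 ^ length L"
  "dg (koszul_complex L) n = koszul_deg L n"
  "dmat (koszul_complex L) n = koszul_mat L"
  by (simp_all add: koszul_complex_def rk_def dg_def dmat_def)

lemma in_P_koszul_mat:
  assumes "\<forall>(p, q, e)\<in>set L. in_P c p \<and> in_P c q"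
  shows "in_P c (koszul_mat L i j)"
  by (rule koszul_mat_entry_pred[where P="in_P c"]) (use assms in_P_zero in_P_uminus in auto)

lemma is_graded_complex_koszul_complex:
  assumes sum: "(\<Sum>(p, q, e)\<leftarrow>L. p * q) = wpot c f"
    and factors: "\<forall>(p, q, e)\<in>set L. in_P c p \<and> in_P c q \<and> homogeneous p e \<and> homogeneous q (1 - e)"
  shows "is_graded_complex c f (koszul_complex L)"
  unfolding is_graded_complex_def koszul_complex_simps
proof (intro conjI allI impI)
  fix n :: int and i j :: nat
  show "in_P c (koszul_mat L i j)" using factors by (intro in_P_koszul_mat) auto
next
  fix n :: int and i j :: nat assume "2 ^ length L \<le> i \<or> 2 ^ length L \<le> j"
  then show "koszul_mat L i j = 0" using koszul_mat_bounded[of L] unfolding mat_bounded_def by blast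
next
  fix n :: int and i j :: nat assume "i < 2 ^ length L \<and> j < 2 ^ length L"
  moreover have "\<forall>(p, q, e)\<in>set L. homogeneous p e \<and> homogeneous q (1 - e)" using factors by auto
  ultimately show "homogeneous (koszul_mat L i j) (koszul_deg L n j - koszul_deg L (n - 1) i)"
    using koszul_mat_homogeneous by blast
next
  fix n :: int and i k :: nat assume "i < 2 ^ length L \<and> k < 2 ^ length L"
  moreover have "(\<Sum>j<2 ^ length L. koszul_mat L i j * koszul_mat L j k) =
      scalar_mat (2 ^ length L) (wpot c f) i k"
    using koszul_mat_square[of L i k] sum by (simp add: mat_mult_def)
  ultimately show "cong_mod (gen_ideal {wpot c f}) (\<Sum>j<2 ^ length L. koszul_mat L i j * koszul_mat L j k) 0"
    unfolding cong_mod_def using gen_ideal_base[of "wpot c f" "{wpot c f}"]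
    by (auto simp: scalar_mat_def ideal_zero[OF is_ideal_gen_ideal])
qed

lemma acyclic_R_koszul_complex:
  assumes "(\<Sum>(p, q, e)\<leftarrow>L. p * q) = wpot c f"
    and "\<forall>(p, q, e)\<in>set L. in_P c p \<and> in_P c q"
    and "\<And>y. wpot c f * y = 0 \<Longrightarrow> y = 0"
  shows "acyclic_R c f (koszul_complex L)"
  unfolding acyclic_R_def koszul_complex_simps cong_mod_def
  using matrix_factorization_exact[OF koszul_mat_square[of L, unfolded assms(1)]
      in_P_koszul_mat[OF assms(2)] assms(3)]
  by blast

lemma coacyclic_R_koszul_complex:
  assumes "(\<Sum>(p, q, e)\<leftarrow>L. p * q) = wpot c f"
    and "\<forall>(p, q, e)\<in>set L. in_P c p \<and> in_P c q"
    and "\<And>y. wpot c f * y = 0 \<Longrightarrow> y = 0"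
  shows "coacyclic_R c f (koszul_complex L)"
proof -
  let ?N = "2 ^ length L" and ?K = "koszul_mat L"
  have square: "mat_mult ?N (\<lambda>i j. ?K j i) (\<lambda>i j. ?K j i) i j = scalar_mat ?N (wpot c f) i j" for i j
  proof -
    have "mat_mult ?N (\<lambda>i j. ?K j i) (\<lambda>i j. ?K j i) i j = mat_mult ?N ?K ?K j i"
      by (rule mat_mult_transpose)
    also have "\<dots> = scalar_mat ?N (wpot c f) j i"
      using koszul_mat_square[of L j i] assms(1) by simp
    finally show ?thesis by (auto simp: scalar_mat_def)
  qed
  show ?thesis
    unfolding coacyclic_R_def koszul_complex_simps cong_mod_def
  proof (intro allI impI)
    fix n :: int and v :: "nat \<Rightarrow> 'a mpoly"
    assume "(\<forall>j. in_P c (v j)) \<and> (\<forall>k<?N. (\<Sum>j<?N. ?K j k * v j) - 0 \<in> gen_ideal {wpot c f})"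
    then show "\<exists>u. (\<forall>i. in_P c (u i)) \<and> (\<forall>j<?N. v j - (\<Sum>i<?N. ?K i j * u i) \<in> gen_ideal {wpot c f})"
      using matrix_factorization_exact[OF square in_P_koszul_mat[OF assms(2)] assms(3), of v] by blast
  qed
qed

lemma grKtac_koszul_complex:
  assumes "(\<Sum>(p, q, e)\<leftarrow>L. p * q) = wpot c f"
    and "\<forall>(p, q, e)\<in>set L. in_P c p \<and> in_P c q \<and> homogeneous p e \<and> homogeneous q (1 - e)"
    and "\<And>y. wpot c f * y = 0 \<Longrightarrow> y = 0"
  shows "grKtac c f (koszul_complex L)"
proof -
  have "\<forall>(p, q, e)\<in>set L. in_P c p \<and> in_P c q" using assms(2) by auto
  then show ?thesis unfolding grKtac_def using assms
    by (simp add: is_graded_complex_koszul_complex acyclic_R_koszul_complex coacyclic_R_koszul_complex)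
qed

lemma koszul_complex_contractible_at:
  assumes "(p, q, e) \<in> set L" "in_P c p" "v * eval_mpoly p a = 1"
  shows "contractible_at c f (koszul_complex L) a"
proof -
  let ?J = "J_alpha c f a" and ?N = "2 ^ length L"
  have J: "is_ideal ?J" unfolding J_alpha_def by (rule is_ideal_gen_ideal)
  have "gen_ideal {Var i - Const (a i) | i. i < c} \<subseteq> ?J"
    unfolding J_alpha_def by (rule gen_ideal_mono) auto
  then have "Const v * (p - Const (eval_mpoly p a)) \<in> ?J"
    using minus_eval_in_point_ideal[OF assms(2), of a] by (intro ideal_multl[OF J]) blast
  moreover have "Const v * (p - Const (eval_mpoly p a)) = Const v * p - 1"
    using assms(3) by (simp add: right_diff_distrib Const_mult[symmetric] Const_one)
  ultimately have "Const v * p - 1 \<in> ?J" by simp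
  then have "\<exists>(p, q, e)\<in>set L. \<exists>u. u * p - 1 \<in> ?J \<and> in_P c u"
    by (intro bexI[OF _ assms(1)]) (auto intro!: exI[of _ "Const v"] in_P_Const)
  then obtain H where H: "\<forall>i j. in_P c (H i j)" "contracting_homotopy ?J ?N (koszul_mat L) H"
    using koszul_mat_contraction[OF J, of "in_P c" L] in_P_zero in_P_uminus by blast
  show ?thesis
    unfolding contractible_at_def koszul_complex_simps cong_mod_def
    using H unfolding contracting_homotopy_def
    by (intro exI[of _ "\<lambda>_. H"]) (auto simp: mat_mult_def scalar_mat_def)
qed

lemma eval_mpoly_J_alpha:
  assumes m: "is_ideal m" and "eval_mpoly (wpot c f) a \<in> m" "x \<in> J_alpha c f a"
  shows "eval_mpoly x a \<in> m"
proof (rule eval_mpoly_gen_ideal[OF m _ assms(3)[unfolded J_alpha_def]], intro ballI)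
  fix g assume "g \<in> insert (wpot c f) {Var i - Const (a i) | i. i < c}"
  then show "eval_mpoly g a \<in> m"
    using assms(2) ideal_zero[OF m] by (auto simp: eval_mpoly_diff eval_mpoly_Var eval_mpoly_Const)
qed

lemma koszul_complex_not_contractible_at:
  assumes m: "is_ideal m" "m \<noteq> UNIV"
    and sum: "(\<Sum>(p, q, e)\<leftarrow>L. p * q) = wpot c f"
    and factors: "\<forall>(p, q, e)\<in>set L. eval_mpoly p a \<in> m \<and> eval_mpoly q a \<in> m"
  shows "\<not> contractible_at c f (koszul_complex L) a"
proof
  let ?K = "koszul_mat L" and ?N = "2 ^ length L"
  assume "contractible_at c f (koszul_complex L) a"
  then obtain s where s: "\<forall>(n::int) i j. i < ?N \<and> j < ?N \<longrightarrow>
      (\<Sum>k<?N. ?K i k * s n k j) + (\<Sum>k<?N. s (n - 1) i k * ?K k j) - (if i = j then 1 else 0)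
        \<in> J_alpha c f a"
    unfolding contractible_at_def koszul_complex_simps cong_mod_def by blast
  have eval_K: "eval_mpoly (?K i j) a \<in> m" for i j
    by (rule koszul_mat_entry_pred)
      (use factors in \<open>auto simp: eval_mpoly_zero eval_mpoly_uminus ideal_zero[OF m(1)] ideal_uminus[OF m(1)]\<close>)
  have "eval_mpoly (\<Sum>(p, q, e)\<leftarrow>L. p * q) a \<in> m"
    using factors by (induction L)
      (auto simp: eval_mpoly_zero eval_mpoly_add eval_mpoly_mult ideal_zero[OF m(1)]
            intro!: ideal_add[OF m(1)] ideal_multr[OF m(1)])
  then have eval_w: "eval_mpoly (wpot c f) a \<in> m" by (simp only: sum)
  define X where "X = (\<Sum>k<?N. ?K 0 k * s 0 k 0) + (\<Sum>k<?N. s (0 - 1) 0 k * ?K k 0)"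
  have "X - 1 \<in> J_alpha c f a" using s[rule_format, of 0 0 0] by (simp add: X_def)
  then have "eval_mpoly (X - 1) a \<in> m" by (rule eval_mpoly_J_alpha[OF m(1) eval_w])
  then have "eval_mpoly X a - 1 \<in> m" by (simp add: eval_mpoly_diff eval_mpoly_one)
  moreover have "eval_mpoly X a \<in> m"
    unfolding X_def eval_mpoly_add eval_mpoly_sum eval_mpoly_mult
    by (intro ideal_add[OF m(1)] ideal_sum[OF m(1)] ideal_multr[OF m(1)] ideal_multl[OF m(1)] eval_K)
  ultimately have "1 \<in> m"
    using ideal_diff[OF m(1), of "eval_mpoly X a" "eval_mpoly X a - 1"] by simp
  then show False using ideal_eq_UNIV_if_one[OF m(1)] m(2) by simp
qed

lemma koszul_complex_contractible_at_iff:
  assumes loc: "local_ring_with m"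
    and sum: "(\<Sum>(p, q, e)\<leftarrow>L. p * q) = wpot c f"
    and factors: "\<forall>(p, q, e)\<in>set L. in_P c p \<and> eval_mpoly q a \<in> m"
  shows "contractible_at c f (koszul_complex L) a \<longleftrightarrow> (\<exists>(p, q, e)\<in>set L. eval_mpoly p a \<notin> m)"
proof
  have m: "is_ideal m" "m \<noteq> UNIV" using loc unfolding local_ring_with_def by auto
  show "\<exists>(p, q, e)\<in>set L. eval_mpoly p a \<notin> m" if "contractible_at c f (koszul_complex L) a"
    using koszul_complex_not_contractible_at[OF m sum] factors that by fastforce
  show "contractible_at c f (koszul_complex L) a" if "\<exists>(p, q, e)\<in>set L. eval_mpoly p a \<notin> m"
  proof -
    from that obtain p q e where pqe: "(p, q, e) \<in> set L" "eval_mpoly p a \<notin> m" by blast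
    moreover obtain v where "v * eval_mpoly p a = 1" using local_ring_unit[OF loc pqe(2)] by blast
    ultimately show ?thesis using factors by (intro koszul_complex_contractible_at) auto
  qed
qed

section \<open>The potential \<open>w\<close>\<close>

lemma wpot_eq_sum_single: "wpot c f = (\<Sum>i<c. single (single i 1) (f i))"
  by (simp add: wpot_def Var_def Const_single)

lemma lookup_wpot_mult_top:
  fixes f :: "nat \<Rightarrow> 'a::comm_ring_1"
  assumes "c > 0" and top: "\<forall>mo\<in>Poly_Mapping.keys y. lookup mo 0 \<le> lookup mt 0"
  shows "lookup (wpot c f * y) (mt + single 0 1) = f 0 * lookup y mt"
proof -
  let ?T = "mt + single 0 1"
  have "lookup (wpot c f * y) ?T = (\<Sum>i<c. lookup (single (single i 1) (f i) * y) ?T)"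
    by (simp add: wpot_eq_sum_single sum_distrib_right lookup_sum)
  also have "\<dots> = (\<Sum>i<c. if i = 0 then f 0 * lookup y mt else 0)"
  proof (rule sum.cong)
    fix i assume "i \<in> {..<c}"
    show "lookup (single (single i 1) (f i) * y) ?T = (if i = 0 then f 0 * lookup y mt else 0)"
    proof (cases "i = 0 \<or> \<not> (\<forall>j. lookup (single i 1) j \<le> lookup ?T j)")
      case True
      then show ?thesis by (auto simp: lookup_single_mult lookup_add)
    next
      case False
      then have "lookup (?T - single i 1) 0 = lookup mt 0 + 1"
        by (simp add: lookup_minus lookup_add lookup_single)
      then have "?T - single i 1 \<notin> Poly_Mapping.keys y" using top by fastforce
      then show ?thesis using False by (simp add: lookup_single_mult in_keys_iff)
    qed
  qed simp
  also have "\<dots> = f 0 * lookup y mt" using assms(1) by (simp add: sum.delta)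
  finally show ?thesis .
qed

text \<open>Compare coefficients at \<open>x\<^sub>0\<close> times a monomial of \<open>y\<close> of maximal \<open>x\<^sub>0\<close>-degree:
  only the summand \<open>f\<^sub>0 x\<^sub>0\<close> of \<open>w\<close> contributes.\<close>
lemma wpot_mult_eq_0_imp_eq_0:
  fixes f :: "nat \<Rightarrow> 'a::comm_ring_1"
  assumes "c > 0" "\<And>r. r * f 0 = 0 \<Longrightarrow> r = 0" "wpot c f * y = 0"
  shows "y = 0"
proof (rule ccontr)
  assume "y \<noteq> 0"
  then have "(\<lambda>mo. lookup mo 0) ` Poly_Mapping.keys y \<noteq> {}" by simp
  then have "Max ((\<lambda>mo. lookup mo 0) ` Poly_Mapping.keys y) \<in> (\<lambda>mo. lookup mo 0) ` Poly_Mapping.keys y"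
    by (intro Max_in) auto
  then obtain mt where mt: "mt \<in> Poly_Mapping.keys y"
      and "lookup mt 0 = Max ((\<lambda>mo. lookup mo 0) ` Poly_Mapping.keys y)"
    by auto
  then have top: "\<forall>mo\<in>Poly_Mapping.keys y. lookup mo 0 \<le> lookup mt 0" by simp
  have "lookup y mt * f 0 = 0"
    using lookup_wpot_mult_top[OF assms(1) top, of f] assms(3) by (simp add: mult.commute)
  then show False using assms(2) mt by (simp add: in_keys_iff)
qed

lemma regular_sequence_wpot_mult_eq_0:
  assumes "0 < c" "regular_sequence c f" "wpot c f * y = 0"
  shows "y = 0"
proof (rule wpot_mult_eq_0_imp_eq_0[OF assms(1) _ assms(3)])
  fix r assume "r * f 0 = 0"
  then have "r * f 0 \<in> gen_ideal (f ` {..<0})" by (simp add: gen_ideal_empty)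
  then have "r \<in> gen_ideal (f ` {..<0})" using assms(1,2) unfolding regular_sequence_def by blast
  then show "r = 0" by (simp add: gen_ideal_empty)
qed

lemma sum_list_concat_map_upt:
  "(\<Sum>x\<leftarrow>concat (map g [0..<n]). h x) = (\<Sum>i<n. (\<Sum>x\<leftarrow>g i. h x))"
  by (induction n) auto

lemma sum_list_Const_Var_factors:
  "(\<Sum>(p, q, e)\<leftarrow>map (\<lambda>(a, b). (Const a * Var i, Const b, 1::int)) L. p * q) =
   Const (\<Sum>(a, b)\<leftarrow>L. a * b) * (Var i :: 'a::comm_ring_1 mpoly)"
  by (induction L) (auto simp: Const_zero Const_add Const_mult algebra_simps)

lemma wpot_factorization:
  assumes m: "is_ideal m" and f: "\<forall>i<c. f i \<in> ideal_sq m"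
  shows "\<exists>Lw :: ('a::comm_ring_1 mpoly \<times> 'a mpoly \<times> int) list.
           (\<Sum>(p, q, e)\<leftarrow>Lw. p * q) = wpot c f \<and>
           (\<forall>(p, q, e)\<in>set Lw. in_P c p \<and> in_P c q \<and> homogeneous p e \<and> homogeneous q (1 - e) \<and>
              (\<forall>a. eval_mpoly p a \<in> m \<and> eval_mpoly q a \<in> m))"
proof -
  have "\<forall>i. \<exists>L. i < c \<longrightarrow> (\<forall>(a, b)\<in>set L. a \<in> m \<and> b \<in> m) \<and> f i = (\<Sum>(a, b)\<leftarrow>L. a * b)"
    using f mem_ideal_sq_sum_list[OF m] by blast
  then obtain Lf where Lf: "\<And>i. i < c \<Longrightarrow> (\<forall>(a, b)\<in>set (Lf i). a \<in> m \<and> b \<in> m) \<and>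
      f i = (\<Sum>(a, b)\<leftarrow>Lf i. a * b)" by metis
  define factors where
    "factors i = map (\<lambda>(a, b). (Const a * Var i, Const b, 1::int)) (Lf i)" for i
  define Lw where "Lw = concat (map factors [0..<c])"
  have "(\<Sum>(p, q, e)\<leftarrow>Lw. p * q) = (\<Sum>i<c. \<Sum>(p, q, e)\<leftarrow>factors i. p * q)"
    unfolding Lw_def by (rule sum_list_concat_map_upt)
  also have "\<dots> = (\<Sum>i<c. Const (f i) * Var i)"
  proof (rule sum.cong)
    fix i assume "i \<in> {..<c}"
    then show "(\<Sum>(p, q, e)\<leftarrow>factors i. p * q) = Const (f i) * Var i"
      unfolding factors_def sum_list_Const_Var_factors using Lf by simp
  qed simp
  finally have "(\<Sum>(p, q, e)\<leftarrow>Lw. p * q) = wpot c f" by (simp add: wpot_def)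
  moreover have "in_P c p \<and> in_P c q \<and> homogeneous p e \<and> homogeneous q (1 - e) \<and>
      (\<forall>a. eval_mpoly p a \<in> m \<and> eval_mpoly q a \<in> m)" if "(p, q, e) \<in> set Lw" for p q e
  proof -
    from that obtain i a b where "i < c" "(a, b) \<in> set (Lf i)"
        and pqe: "p = Const a * Var i" "q = Const b" "e = 1"
      unfolding Lw_def factors_def by auto
    then have "a \<in> m" "b \<in> m" using Lf by auto
    then show ?thesis using pqe \<open>i < c\<close> homogeneous_Const_mult_Var homogeneous_Const
      by (auto simp: in_P_mult in_P_Const in_P_Var eval_mpoly_mult eval_mpoly_Const eval_mpoly_Var
               intro: ideal_multr[OF m])
  qed
  ultimately show ?thesis by (intro exI[of _ Lw]) blast
qed

lemma zero_locus_cong_gen_ideal: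
  assumes "is_ideal m" "S0 \<subseteq> S" "S \<subseteq> gen_ideal S0"
  shows "zero_locus m S a \<longleftrightarrow> zero_locus m S0 a"
  using assms eval_mpoly_gen_ideal[OF assms(1)] unfolding zero_locus_def by blast

lemma koszul_complex_with_forms:
  fixes Lw :: "('a::comm_ring_1 mpoly \<times> 'a mpoly \<times> int) list" and Fs :: "'a mpoly list"
    and deg :: "'a mpoly \<Rightarrow> int"
  defines "L \<equiv> Lw @ map (\<lambda>F. (F, 0, deg F)) Fs"
  assumes loc: "local_ring_with m"
    and Lw_sum: "(\<Sum>(p, q, e)\<leftarrow>Lw. p * q) = wpot c f"
    and Lw: "\<forall>(p, q, e)\<in>set Lw. in_P c p \<and> in_P c q \<and> homogeneous p e \<and> homogeneous q (1 - e) \<and>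
                 (\<forall>a. eval_mpoly p a \<in> m \<and> eval_mpoly q a \<in> m)"
    and Fs: "\<forall>F\<in>set Fs. in_P c F \<and> homogeneous F (deg F)"
    and nzd: "\<And>y. wpot c f * y = 0 \<Longrightarrow> y = 0"
  shows "grKtac c f (koszul_complex L)"
    and "\<not> contractible_at c f (koszul_complex L) a \<longleftrightarrow> zero_locus m (set Fs) a"
proof -
  have L_sum: "(\<Sum>(p, q, e)\<leftarrow>L. p * q) = wpot c f"
    using Lw_sum by (simp add: L_def comp_def)
  have L_factors: "\<forall>(p, q, e)\<in>set L. in_P c p \<and> in_P c q \<and> homogeneous p e \<and> homogeneous q (1 - e)"
    using Lw Fs by (auto simp: L_def in_P_zero homogeneous_zero)
  show "grKtac c f (koszul_complex L)" using nzd by (rule grKtac_koszul_complex[OF L_sum L_factors])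
  have "0 \<in> m" using loc ideal_zero unfolding local_ring_with_def by blast
  have "contractible_at c f (koszul_complex L) a \<longleftrightarrow> (\<exists>(p, q, e)\<in>set L. eval_mpoly p a \<notin> m)"
    using Lw L_factors \<open>0 \<in> m\<close>
    by (intro koszul_complex_contractible_at_iff[OF loc L_sum]) (auto simp: L_def eval_mpoly_zero)
  also have "\<dots> \<longleftrightarrow> \<not> zero_locus m (set Fs) a"
    using Lw by (auto simp: L_def zero_locus_def)
  finally show "\<not> contractible_at c f (koszul_complex L) a \<longleftrightarrow> zero_locus m (set Fs) a" by blast
qed

theorem mainTheorem11:
  fixes m :: "'a::comm_ring_1 set" and c :: nat and f :: "nat \<Rightarrow> 'a"
    and S :: "'a mpoly set"
  assumes "regular_local_ring m"
    and "c \<ge> 2"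
    and "\<forall>i<c. f i \<in> ideal_sq m"
    and "regular_sequence c f"
    and "homog_poly_set c S"
  shows "\<exists>C. grKtac c f C \<and>
           (\<forall>a. proj_point_lift c m a \<longrightarrow>
              (\<not> contractible_at c f C a \<longleftrightarrow> zero_locus m S a))"
proof -
  \<comment> \<open>The equivalence holds at every \<open>a\<close>.\<close>
  have loc: "local_ring_with m" and noeth: "noetherian_ring TYPE('a)"
    using assms(1) unfolding regular_local_ring_def by auto
  then have m: "is_ideal m" unfolding local_ring_with_def by blast
  obtain deg where S: "\<forall>F\<in>S. in_P c F \<and> homogeneous F (deg F)"
    using assms(5) unfolding homog_poly_set_def by metis
  then have "\<forall>F\<in>S. in_P c F" by blast
  then obtain S0 where S0: "finite S0" "S0 \<subseteq> S" "S \<subseteq> gen_ideal S0"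
    by (rule hilbert_basis[OF noeth, elim_format]) (elim exE conjE)
  obtain Fs where Fs: "set Fs = S0" using finite_list[OF S0(1)] by blast
  obtain Lw where Lw_sum: "(\<Sum>(p, q, e)\<leftarrow>Lw. p * q) = wpot c f"
    and Lw: "\<forall>(p, q, e)\<in>set Lw. in_P c p \<and> in_P c q \<and> homogeneous p e \<and> homogeneous q (1 - e) \<and>
                 (\<forall>a. eval_mpoly p a \<in> m \<and> eval_mpoly q a \<in> m)"
    using wpot_factorization[OF m assms(3)] by (elim exE conjE)
  have "y = 0" if "wpot c f * y = 0" for y
    using regular_sequence_wpot_mult_eq_0[OF _ assms(4) that] assms(2) by simp
  note koszul = koszul_complex_with_forms[OF loc Lw_sum Lw _ this, of Fs deg]
  show ?thesis
    using koszul S S0 Fs zero_locus_cong_gen_ideal[OF m S0(2,3)] by blast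
qed

end
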